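(* Suppose $x\in{\cal B}$ and ${\bm\theta}={\bm\theta}^0-{\mathbf e}$ where ${\bm\theta}^0=Hx$ and ${\mathbf e}\in\mathbb R^N$. Then $\lim_{k\to\infty}(P_{\cal B}P_{{\cal C}({\bm\theta})})^k z=H^\dagger({\bm\theta}^0-\bar{\mathbf e})$, where $\bar{\mathbf e}$ is the $\langle\cdot,\cdot\rangle_N$-orthogonal projection of ${\mathbf e}$ onto $\mathrm{ran}(H)$, and $\|\bar{\mathbf e}\|_N^2+\|{\mathbf e}-\bar{\mathbf e}\|_N^2=\|{\mathbf e}\|_N^2$; in particular $\|\bar{\mathbf e}\|_N\le\|{\mathbf e}\|_N$.
   Context: $D=\mathbb R$ or $[0,T]$ ($T$ an odd positive integer); $L^2(D)$ is the real Hilbert space with $\langle u,v\rangle=\int_D uv\,dt$. ${\cal B}$ is the closed subspace of signals bandlimited to $[-\pi,\pi]$ and $P_{\cal B}$ the orthogonal projection onto it; $z$ is the zero function. Fix $\alpha\ge0$, $N\ge1$, instants $0=t_0<\dots<t_N$ in $D$, $h_n(t)=e^{-\alpha(t_n-t)}\mathbf 1_{[t_{n-1},t_n)}(t)$. ${\cal C}({\bm\theta})=\{u\in L^2(D):\langle h_n,u\rangle=\theta_n\ \forall n\}$ with orthogonal projection $P_{{\cal C}({\bm\theta})}$. $H:{\cal B}\to\mathbb R^N$, $Hu=(\langle h_n,u\rangle)_n$. $\langle{\mathbf u},{\mathbf v}\rangle_N=\sum_n u_nv_n/\|h_n\|^2$, norm $\|\cdot\|_N$. For ${\mathbf w}\in\mathbb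 R^N$, $H^\dagger{\mathbf w}$ denotes the minimal-norm element of $\{u\in{\cal B}:Hu=\bar{\mathbf w}\}$, where $\bar{\mathbf w}$ is the $\langle\cdot,\cdot\rangle_N$-orthogonal projection of ${\mathbf w}$ onto $\mathrm{ran}(H)$. *)

theory Defs
  imports "HOL-Analysis.Analysis"
begin

datatype domain = RealLine | Interval nat

fun dset :: "domain \<Rightarrow> real set" where
  "dset RealLine = UNIV"
| "dset (Interval T) = {0..real T}"

text \<open>L^2(D): (Borel) measurable real functions, square integrable over D.
  Only values on D matter; all norms/inner products integrate over D.\<close>
definition L2 :: "real set \<Rightarrow> (real \<Rightarrow> real) set" where
  "L2 D = {u. u \<in> borel_measurable lborel \<and> set_integrable lborel D (\<lambda>t. (u t)^2)}"

definition ip :: "real set \<Rightarrow> (real \<Rightarrow> real) \<Rightarrow> (real \<Rightarrow> real) \<Rightarrow> real" where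
  "ip D u v = (LINT t:D|lborel. u t * v t)"

definition nrm :: "real set \<Rightarrow> (real \<Rightarrow> real) \<Rightarrow> real" where
  "nrm D u = sqrt (ip D u u)"

text \<open>Orthogonal projection onto a closed (affine) subset S of L^2(D):
  a nearest point of S (unique up to a.e. equality on D).\<close>
definition proj :: "real set \<Rightarrow> (real \<Rightarrow> real) set \<Rightarrow> (real \<Rightarrow> real) \<Rightarrow> (real \<Rightarrow> real)" where
  "proj D S u = (SOME v. v \<in> S \<and> (\<forall>w\<in>S. nrm D (\<lambda>t. u t - v t) \<le> nrm D (\<lambda>t. u t - w t)))"

text \<open>On [0,T], T odd: T-periodic
  bandlimited signals, i.e. real trigonometric polynomials with frequencies
  2 pi k/T, |k| <= (T-1)/2.\<close>
fun bandlimited :: "domain \<Rightarrow> (real \<Rightarrow> real) \<Rightarrow> bool" where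
  "bandlimited RealLine u =
     (\<exists>F :: real \<Rightarrow> complex. F \<in> borel_measurable lborel \<and>
        set_integrable lborel {-pi..pi} (\<lambda>w. (cmod (F w))^2) \<and>
        (\<forall>t. complex_of_real (u t) =
              set_lebesgue_integral lborel {-pi..pi} (\<lambda>w. F w * exp (\<i> * complex_of_real (w * t)))))"
| "bandlimited (Interval T) u =
     (\<exists>a b :: nat \<Rightarrow> real. \<forall>t\<in>{0..real T}.
        u t = a 0 + (\<Sum>k=1..(T - 1) div 2.
                a k * cos (2 * pi * real k * t / real T) + b k * sin (2 * pi * real k * t / real T)))"

definition BL :: "domain \<Rightarrow> (real \<Rightarrow> real) set" where
  "BL dm = {u \<in> L2 (dset dm). bandlimited dm u}"

definition hfun :: "real \<Rightarrow> (nat \<Rightarrow> real) \<Rightarrow> nat \<Rightarrow> real \<Rightarrow> real" where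
  "hfun \<alpha> tt n = (\<lambda>s. exp (- \<alpha> * (tt n - s)) * indicator {tt (n - 1)..<tt n} s)"

text \<open>Vectors of R^N are functions nat => real, only indices 1..N are used.\<close>
definition Hmap :: "domain \<Rightarrow> real \<Rightarrow> (nat \<Rightarrow> real) \<Rightarrow> nat \<Rightarrow> (real \<Rightarrow> real) \<Rightarrow> nat \<Rightarrow> real" where
  "Hmap dm \<alpha> tt N u = (\<lambda>n. if n \<in> {1..N} then ip (dset dm) (hfun \<alpha> tt n) u else 0)"

definition Cset :: "domain \<Rightarrow> real \<Rightarrow> (nat \<Rightarrow> real) \<Rightarrow> nat \<Rightarrow> (nat \<Rightarrow> real) \<Rightarrow> (real \<Rightarrow> real) set" where
  "Cset dm \<alpha> tt N \<theta> = {u \<in> L2 (dset dm). \<forall>n\<in>{1..N}. ip (dset dm) (hfun \<alpha> tt n) u = \<theta> n}"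

definition ipN :: "domain \<Rightarrow> real \<Rightarrow> (nat \<Rightarrow> real) \<Rightarrow> nat \<Rightarrow> (nat \<Rightarrow> real) \<Rightarrow> (nat \<Rightarrow> real) \<Rightarrow> real" where
  "ipN dm \<alpha> tt N x y = (\<Sum>n=1..N. x n * y n / (nrm (dset dm) (hfun \<alpha> tt n))^2)"

definition nrmN :: "domain \<Rightarrow> real \<Rightarrow> (nat \<Rightarrow> real) \<Rightarrow> nat \<Rightarrow> (nat \<Rightarrow> real) \<Rightarrow> real" where
  "nrmN dm \<alpha> tt N x = sqrt (ipN dm \<alpha> tt N x x)"

definition projN :: "domain \<Rightarrow> real \<Rightarrow> (nat \<Rightarrow> real) \<Rightarrow> nat \<Rightarrow> (nat \<Rightarrow> real) \<Rightarrow> nat \<Rightarrow> real" where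
  "projN dm \<alpha> tt N w = (SOME v. v \<in> Hmap dm \<alpha> tt N ` BL dm \<and>
      (\<forall>v'\<in>Hmap dm \<alpha> tt N ` BL dm.
         nrmN dm \<alpha> tt N (\<lambda>n. w n - v n) \<le> nrmN dm \<alpha> tt N (\<lambda>n. w n - v' n)))"

definition Hdag :: "domain \<Rightarrow> real \<Rightarrow> (nat \<Rightarrow> real) \<Rightarrow> nat \<Rightarrow> (nat \<Rightarrow> real) \<Rightarrow> real \<Rightarrow> real" where
  "Hdag dm \<alpha> tt N w = (SOME u. u \<in> BL dm \<and> Hmap dm \<alpha> tt N u = projN dm \<alpha> tt N w \<and>
      (\<forall>u'\<in>BL dm. Hmap dm \<alpha> tt N u' = projN dm \<alpha> tt N w \<longrightarrow>
          nrm (dset dm) u \<le> nrm (dset dm) u'))"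

end

theory Submission
  imports Defs "HOL-Probability.Sinc_Integral"
begin

text \<open>
  Both projections act in the semi-inner product space \<open>L\<^sup>2(D)\<close>, where they are determined only up to
  null functions. With \<open>b\<^sub>n = P\<^sub>B h\<^sub>n\<close>, one step of \<open>P\<^sub>B P\<^sub>C\<close> maps \<open>u\<close> to
  \<open>u + \<Sum>\<^sub>n (\<theta>\<^sub>n - \<langle>h\<^sub>n,u\<rangle>) / \<parallel>h\<^sub>n\<parallel>\<^sup>2 b\<^sub>n\<close>, a Landweber step for \<open>H\<close> with respect to
  \<open>\<langle>\<cdot>,\<cdot>\<rangle>\<^sub>N\<close>. The minimal-norm solution \<open>H\<^sup>\<dagger>(\<theta>\<^sup>0 - ebar)\<close> is a combination
  \<open>\<Sum>\<^sub>n p\<^sub>n / \<parallel>h\<^sub>n\<parallel>\<^sup>2 b\<^sub>n\<close> whose samples are the \<open>\<langle>\<cdot>,\<cdot>\<rangle>\<^sub>N\<close>-projection of \<open>\<theta>\<close> onto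
  \<open>ran H\<close>, so the components of \<open>\<theta>\<close> outside \<open>ran H\<close> only contribute null functions. The error
  of the \<open>k\<close>-th iterate is then \<open>\<Sum>\<^sub>n r\<^sub>n / \<parallel>h\<^sub>n\<parallel>\<^sup>2 b\<^sub>n\<close> for a coefficient residual with
  \<open>r \<mapsto> r - H(\<Sum>\<^sub>n r\<^sub>n / \<parallel>h\<^sub>n\<parallel>\<^sup>2 b\<^sub>n)\<close>, and by Bessel's inequality for the orthogonal \<open>h\<^sub>n\<close>
  each step lowers \<open>\<parallel>r\<parallel>\<^sub>N\<^sup>2\<close> by at least the squared error. Hence the errors tend to zero.

  The projections \<open>b\<^sub>n\<close> exist because on \<open>[0,T]\<close> the space \<open>B\<close> is finite-dimensional, and on
  \<open>\<real>\<close> the convolution of \<open>h\<^sub>n\<close> with the sinc kernel is bandlimited and, since the sinc kernel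
  reproduces Paley--Wiener functions, has the same inner products with \<open>B\<close> as \<open>h\<^sub>n\<close>.
\<close>

section \<open>Semi-inner product spaces of functions\<close>

definition form_norm :: "(('a \<Rightarrow> real) \<Rightarrow> ('a \<Rightarrow> real) \<Rightarrow> real) \<Rightarrow> ('a \<Rightarrow> real) \<Rightarrow> real" where
  "form_norm f u = sqrt (f u u)"

definition nearest_point ::
  "(('a \<Rightarrow> real) \<Rightarrow> ('a \<Rightarrow> real) \<Rightarrow> real) \<Rightarrow> ('a \<Rightarrow> real) set \<Rightarrow> ('a \<Rightarrow> real) \<Rightarrow> 'a \<Rightarrow> real" where
  "nearest_point f S u =
     (SOME v. v \<in> S \<and> (\<forall>w\<in>S. form_norm f (\<lambda>t. u t - v t) \<le> form_norm f (\<lambda>t. u t - w t)))"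

definition lin_span :: "'i set \<Rightarrow> ('i \<Rightarrow> 'a \<Rightarrow> real) \<Rightarrow> ('a \<Rightarrow> real) set" where
  "lin_span I g = {v. \<exists>c. v = (\<lambda>t. \<Sum>i\<in>I. c i * g i t)}"

lemma lin_span_lincomb:
  "v \<in> lin_span I g \<Longrightarrow> w \<in> lin_span I g \<Longrightarrow> (\<lambda>t. a * v t + b * w t) \<in> lin_span I g"
proof -
  assume "v \<in> lin_span I g" "w \<in> lin_span I g"
  then obtain c d where "v = (\<lambda>t. \<Sum>i\<in>I. c i * g i t)" "w = (\<lambda>t. \<Sum>i\<in>I. d i * g i t)"
    unfolding lin_span_def by auto
  then have "(\<lambda>t. a * v t + b * w t) = (\<lambda>t. \<Sum>i\<in>I. (a * c i + b * d i) * g i t)"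
    by (simp add: sum_distrib_left sum.distrib algebra_simps)
  then show ?thesis unfolding lin_span_def by (intro CollectI exI[of _ "\<lambda>i. a * c i + b * d i"])
qed

lemma lin_span_insert_mono: "j \<notin> I \<Longrightarrow> finite I \<Longrightarrow> lin_span I g \<subseteq> lin_span (insert j I) g"
proof
  fix v assume "j \<notin> I" "finite I" "v \<in> lin_span I g"
  then obtain c where "v = (\<lambda>t. \<Sum>i\<in>I. c i * g i t)" unfolding lin_span_def by auto
  then have "v = (\<lambda>t. \<Sum>i\<in>insert j I. (c(j:=0)) i * g i t)"
    using \<open>j \<notin> I\<close> \<open>finite I\<close> by (auto intro!: sum.cong)
  then show "v \<in> lin_span (insert j I) g" unfolding lin_span_def by blast
qed

lemma lin_span_generator: "j \<in> I \<Longrightarrow> finite I \<Longrightarrow> g j \<in> lin_span I g"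
proof -
  assume "j \<in> I" "finite I"
  have "(\<Sum>i\<in>I. (if i = j then 1 else 0) * g i t) = (\<Sum>i\<in>I. if j = i then g j t else 0)" for t
    by (rule sum.cong) auto
  then have "(\<Sum>i\<in>I. (if i = j then 1 else 0) * g i t) = g j t" for t
    using \<open>j \<in> I\<close> \<open>finite I\<close> by simp
  then have "g j = (\<lambda>t. \<Sum>i\<in>I. (if i = j then 1 else 0) * g i t)" by simp
  then show ?thesis unfolding lin_span_def by (intro CollectI exI[of _ "\<lambda>i. if i = j then 1 else 0"])
qed

lemma lin_span_insertE:
  assumes "j \<notin> I" "finite I" "w \<in> lin_span (insert j I) g"
  obtains a z where "z \<in> lin_span I g" "w = (\<lambda>t. a * g j t + z t)"
proof -
  obtain c where "w = (\<lambda>t. \<Sum>i\<in>insert j I. c i * g i t)" using assms(3) unfolding lin_span_def by auto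
  then have "w = (\<lambda>t. c j * g j t + (\<Sum>i\<in>I. c i * g i t))" using assms(1,2) by simp
  moreover have "(\<lambda>t. \<Sum>i\<in>I. c i * g i t) \<in> lin_span I g" unfolding lin_span_def by blast
  ultimately show ?thesis using that by blast
qed

locale semi_inner_space =
  fixes V :: "('a \<Rightarrow> real) set" and f :: "('a \<Rightarrow> real) \<Rightarrow> ('a \<Rightarrow> real) \<Rightarrow> real"
  assumes V_zero: "(\<lambda>_. 0) \<in> V"
    and V_lincomb: "u \<in> V \<Longrightarrow> v \<in> V \<Longrightarrow> (\<lambda>t. a * u t + b * v t) \<in> V"
    and f_sym: "u \<in> V \<Longrightarrow> v \<in> V \<Longrightarrow> f u v = f v u"
    and f_lincomb_left: "u \<in> V \<Longrightarrow> v \<in> V \<Longrightarrow> w \<in> V \<Longrightarrow>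
      f (\<lambda>t. a * u t + b * v t) w = a * f u w + b * f v w"
    and f_nonneg: "u \<in> V \<Longrightarrow> f u u \<ge> 0"
begin

lemma V_add: "u \<in> V \<Longrightarrow> v \<in> V \<Longrightarrow> (\<lambda>t. u t + v t) \<in> V"
  using V_lincomb[of u v 1 1] by simp

lemma V_diff: "u \<in> V \<Longrightarrow> v \<in> V \<Longrightarrow> (\<lambda>t. u t - v t) \<in> V"
  using V_lincomb[of u v 1 "-1"] by simp

lemma V_scale: "u \<in> V \<Longrightarrow> (\<lambda>t. a * u t) \<in> V"
  using V_lincomb[of u u a 0] by simp

lemma V_sum: "finite I \<Longrightarrow> (\<And>i. i \<in> I \<Longrightarrow> g i \<in> V) \<Longrightarrow> (\<lambda>t. \<Sum>i\<in>I. c i * g i t) \<in> V"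
proof (induction I rule: finite_induct)
  case empty then show ?case using V_zero by simp
next
  case (insert j I)
  then have "(\<lambda>t. c j * g j t + 1 * (\<Sum>i\<in>I. c i * g i t)) \<in> V"
    by (intro V_lincomb) auto
  then show ?case using insert by simp
qed

lemma lin_span_subset: "finite I \<Longrightarrow> (\<And>i. i \<in> I \<Longrightarrow> g i \<in> V) \<Longrightarrow> lin_span I g \<subseteq> V"
  unfolding lin_span_def using V_sum by auto

lemma f_add_left: "u \<in> V \<Longrightarrow> v \<in> V \<Longrightarrow> w \<in> V \<Longrightarrow> f (\<lambda>t. u t + v t) w = f u w + f v w"
  using f_lincomb_left[of u v w 1 1] by simp

lemma f_diff_left: "u \<in> V \<Longrightarrow> v \<in> V \<Longrightarrow> w \<in> V \<Longrightarrow> f (\<lambda>t. u t - v t) w = f u w - f v w"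
  using f_lincomb_left[of u v w 1 "-1"] by simp

lemma f_scale_left: "u \<in> V \<Longrightarrow> w \<in> V \<Longrightarrow> f (\<lambda>t. a * u t) w = a * f u w"
  using f_lincomb_left[of u u w a 0] by simp

lemma f_zero_left: "w \<in> V \<Longrightarrow> f (\<lambda>_. 0) w = 0"
  using f_scale_left[of w w 0] by simp

lemma f_lincomb_right:
  "u \<in> V \<Longrightarrow> v \<in> V \<Longrightarrow> w \<in> V \<Longrightarrow> f w (\<lambda>t. a * u t + b * v t) = a * f w u + b * f w v"
  using f_sym[OF _ V_lincomb, of w u v a b] f_lincomb_left[of u v w a b] f_sym[of u w] f_sym[of v w]
  by simp

lemma f_add_right: "u \<in> V \<Longrightarrow> v \<in> V \<Longrightarrow> w \<in> V \<Longrightarrow> f w (\<lambda>t. u t + v t) = f w u + f w v"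
  using f_lincomb_right[of u v w 1 1] by simp

lemma f_diff_right: "u \<in> V \<Longrightarrow> v \<in> V \<Longrightarrow> w \<in> V \<Longrightarrow> f w (\<lambda>t. u t - v t) = f w u - f w v"
  using f_lincomb_right[of u v w 1 "-1"] by simp

lemma f_scale_right: "u \<in> V \<Longrightarrow> w \<in> V \<Longrightarrow> f w (\<lambda>t. a * u t) = a * f w u"
  using f_lincomb_right[of u u w a 0] by simp

lemma f_sum_left:
  "finite I \<Longrightarrow> (\<And>i. i \<in> I \<Longrightarrow> g i \<in> V) \<Longrightarrow> w \<in> V \<Longrightarrow>
   f (\<lambda>t. \<Sum>i\<in>I. c i * g i t) w = (\<Sum>i\<in>I. c i * f (g i) w)"
proof (induction I rule: finite_induct)
  case empty then show ?case using f_zero_left by simp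
next
  case (insert j I)
  have "f (\<lambda>t. c j * g j t + 1 * (\<Sum>i\<in>I. c i * g i t)) w =
      c j * f (g j) w + 1 * f (\<lambda>t. \<Sum>i\<in>I. c i * g i t) w"
    using insert by (intro f_lincomb_left V_sum) auto
  then show ?case using insert by simp
qed

lemma f_sum_right:
  "finite I \<Longrightarrow> (\<And>i. i \<in> I \<Longrightarrow> g i \<in> V) \<Longrightarrow> w \<in> V \<Longrightarrow>
   f w (\<lambda>t. \<Sum>i\<in>I. c i * g i t) = (\<Sum>i\<in>I. c i * f w (g i))"
  by (subst f_sym) (auto intro: V_sum simp: f_sum_left f_sym)

lemma f_expand_diff:
  "u \<in> V \<Longrightarrow> v \<in> V \<Longrightarrow> f (\<lambda>t. u t - v t) (\<lambda>t. u t - v t) = f u u - 2 * f u v + f v v"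
  by (simp add: f_diff_left f_diff_right V_diff f_sym[of v u])

lemma f_expand_add:
  "u \<in> V \<Longrightarrow> v \<in> V \<Longrightarrow> f (\<lambda>t. u t + v t) (\<lambda>t. u t + v t) = f u u + 2 * f u v + f v v"
  by (simp add: f_add_left f_add_right V_add f_sym[of v u])

text \<open>Expand \<open>f (u + s v) (u + s v) \<ge> 0\<close> with \<open>s = - f u v / (f v v + 1)\<close>.\<close>
lemma null_orthogonal:
  assumes u: "u \<in> V" and v: "v \<in> V" and null: "f u u = 0"
  shows "f u v = 0"
proof -
  define c where "c = f v v + 1"
  have c1: "c \<ge> 1" using f_nonneg[OF v] by (simp add: c_def)
  define s where "s = - f u v / c"
  have "0 \<le> f (\<lambda>t. u t + s * v t) (\<lambda>t. u t + s * v t)"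
    by (intro f_nonneg V_add V_scale u v)
  also have "\<dots> = f u u + 2 * s * f u v + s * s * f v v"
    using u v by (simp add: f_expand_add V_scale f_scale_left f_scale_right)
  also have "\<dots> = (f u v)^2 * (f v v - 2 * c) / c^2"
    using c1 by (simp add: null s_def field_simps power2_eq_square)
  finally have "0 \<le> (f u v)^2 * (f v v - 2 * c)"
    using c1 by (simp add: zero_le_divide_iff)
  moreover have "f v v - 2 * c < 0" using f_nonneg[OF v] by (simp add: c_def)
  ultimately have "(f u v)^2 \<le> 0" by (simp add: zero_le_mult_iff)
  then show ?thesis by simp
qed

definition null_equiv :: "('a \<Rightarrow> real) \<Rightarrow> ('a \<Rightarrow> real) \<Rightarrow> bool" where
  "null_equiv u v \<longleftrightarrow> f (\<lambda>t. u t - v t) (\<lambda>t. u t - v t) = 0"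

lemma null_equiv_f_left:
  "null_equiv u v \<Longrightarrow> u \<in> V \<Longrightarrow> v \<in> V \<Longrightarrow> w \<in> V \<Longrightarrow> f u w = f v w"
  using null_orthogonal[of "\<lambda>t. u t - v t" w] by (simp add: null_equiv_def V_diff f_diff_left)

lemma null_equiv_f_right:
  "null_equiv u v \<Longrightarrow> u \<in> V \<Longrightarrow> v \<in> V \<Longrightarrow> w \<in> V \<Longrightarrow> f w u = f w v"
  using null_equiv_f_left[of u v w] f_sym[of w u] f_sym[of w v] by simp

lemma null_equiv_refl: "null_equiv u u"
  unfolding null_equiv_def using f_zero_left[OF V_zero] by simp

lemma null_equiv_sym: "null_equiv u v \<Longrightarrow> u \<in> V \<Longrightarrow> v \<in> V \<Longrightarrow> null_equiv v u"
  unfolding null_equiv_def using f_expand_diff by (simp add: f_sym)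

lemma null_equiv_norm: "null_equiv u v \<Longrightarrow> u \<in> V \<Longrightarrow> v \<in> V \<Longrightarrow> f u u = f v v"
  using null_equiv_f_left[of u v u] null_equiv_f_right[of u v v] by simp

lemma null_equiv_trans:
  assumes "null_equiv u v" "null_equiv v w" "u \<in> V" "v \<in> V" "w \<in> V"
  shows "null_equiv u w"
proof -
  have "f u u = f v u" "f u w = f v w" "f w w = f w v" "f v v = f v w" "f u v = f u w"
    using null_equiv_f_left[OF assms(1,3,4)] null_equiv_f_right[OF assms(2,4,5)] assms by auto
  then show ?thesis
    using f_expand_diff[OF assms(3,5)] f_expand_diff[OF assms(4,5)] assms(2) f_sym[of u v] assms
    unfolding null_equiv_def by simp
qed

lemma null_equiv_lincomb:
  assumes "null_equiv u u'" "null_equiv v v'" "u \<in> V" "u' \<in> V" "v \<in> V" "v' \<in> V"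
  shows "null_equiv (\<lambda>t. a * u t + b * v t) (\<lambda>t. a * u' t + b * v' t)"
proof -
  let ?p = "\<lambda>t. u t - u' t" and ?q = "\<lambda>t. v t - v' t"
  have p: "?p \<in> V" "f ?p ?p = 0" and q: "?q \<in> V" "f ?q ?q = 0"
    using assms V_diff by (auto simp: null_equiv_def)
  have "f ?p ?q = 0" "f ?q ?p = 0" using null_orthogonal p q by auto
  then have "f (\<lambda>t. a * ?p t + b * ?q t) (\<lambda>t. a * ?p t + b * ?q t) = 0"
    using p q by (simp add: f_lincomb_left f_lincomb_right V_lincomb)
  then show ?thesis unfolding null_equiv_def by (simp add: algebra_simps)
qed

lemma null_equiv_add:
  "null_equiv u u' \<Longrightarrow> null_equiv v v' \<Longrightarrow> u \<in> V \<Longrightarrow> u' \<in> V \<Longrightarrow> v \<in> V \<Longrightarrow> v' \<in> V \<Longrightarrow>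
   null_equiv (\<lambda>t. u t + v t) (\<lambda>t. u' t + v' t)"
  using null_equiv_lincomb[of u u' v v' 1 1] by simp

lemma null_equiv_diff:
  "null_equiv u u' \<Longrightarrow> null_equiv v v' \<Longrightarrow> u \<in> V \<Longrightarrow> u' \<in> V \<Longrightarrow> v \<in> V \<Longrightarrow> v' \<in> V \<Longrightarrow>
   null_equiv (\<lambda>t. u t - v t) (\<lambda>t. u' t - v' t)"
  using null_equiv_lincomb[of u u' v v' 1 "-1"] by simp

text \<open>A nearest point chosen by \<open>SOME\<close> is only determined up to a null function.\<close>
lemma nearest_point_null_equiv:
  assumes S: "S \<subseteq> V" and u: "u \<in> V" and p: "p \<in> S"
    and orth: "\<And>w. w \<in> S \<Longrightarrow> f (\<lambda>t. u t - p t) (\<lambda>t. p t - w t) = 0"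
  shows "nearest_point f S u \<in> S \<and> null_equiv (nearest_point f S u) p"
proof -
  have pV: "p \<in> V" using S p by auto
  have pyth: "f (\<lambda>t. u t - w t) (\<lambda>t. u t - w t) =
      f (\<lambda>t. u t - p t) (\<lambda>t. u t - p t) + f (\<lambda>t. p t - w t) (\<lambda>t. p t - w t)" if w: "w \<in> S" for w
  proof -
    have "f (\<lambda>t. (u t - p t) + (p t - w t)) (\<lambda>t. (u t - p t) + (p t - w t)) =
       f (\<lambda>t. u t - p t) (\<lambda>t. u t - p t) + 2 * f (\<lambda>t. u t - p t) (\<lambda>t. p t - w t)
       + f (\<lambda>t. p t - w t) (\<lambda>t. p t - w t)"
      using f_expand_add[of "\<lambda>t. u t - p t" "\<lambda>t. p t - w t"] u pV w S V_diff by auto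
    then show ?thesis using orth[OF w] by simp
  qed
  have "\<exists>v. v \<in> S \<and> (\<forall>w\<in>S. form_norm f (\<lambda>t. u t - v t) \<le> form_norm f (\<lambda>t. u t - w t))"
  proof (intro exI[of _ p] conjI ballI)
    fix w assume w: "w \<in> S"
    have "0 \<le> f (\<lambda>t. p t - w t) (\<lambda>t. p t - w t)" using w S pV by (intro f_nonneg V_diff) auto
    then show "form_norm f (\<lambda>t. u t - p t) \<le> form_norm f (\<lambda>t. u t - w t)"
      unfolding form_norm_def pyth[OF w] by simp
  qed (rule p)
  then have "nearest_point f S u \<in> S \<and>
      (\<forall>w\<in>S. form_norm f (\<lambda>t. u t - nearest_point f S u t) \<le> form_norm f (\<lambda>t. u t - w t))"
    unfolding nearest_point_def by (rule someI_ex)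
  then have q: "nearest_point f S u \<in> S"
      "form_norm f (\<lambda>t. u t - nearest_point f S u t) \<le> form_norm f (\<lambda>t. u t - p t)"
    using p by auto
  define q where "q = nearest_point f S u"
  have qV: "q \<in> V" using q S unfolding q_def by auto
  have "f (\<lambda>t. u t - q t) (\<lambda>t. u t - q t) \<le> f (\<lambda>t. u t - p t) (\<lambda>t. u t - p t)"
    using q(2) f_nonneg[OF V_diff[OF u qV]] f_nonneg[OF V_diff[OF u pV]]
    unfolding form_norm_def q_def by simp
  then have "f (\<lambda>t. p t - q t) (\<lambda>t. p t - q t) = 0"
    using pyth[OF q(1)] f_nonneg[OF V_diff[OF pV qV]] unfolding q_def by simp
  then show ?thesis using q qV pV null_equiv_sym unfolding q_def null_equiv_def by blast
qed

lemma orthogonal_residual_add_direction: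
  assumes r: "r \<in> V" and psi: "\<psi> \<in> V" and S: "S \<subseteq> V"
    and r_orth: "\<And>z. z \<in> S \<Longrightarrow> f r z = 0" and psi_orth: "\<And>z. z \<in> S \<Longrightarrow> f \<psi> z = 0"
  obtains \<alpha> where "f (\<lambda>t. r t - \<alpha> * \<psi> t) \<psi> = 0" "\<And>z. z \<in> S \<Longrightarrow> f (\<lambda>t. r t - \<alpha> * \<psi> t) z = 0"
proof -
  define \<alpha> where "\<alpha> = (if f \<psi> \<psi> = 0 then 0 else f r \<psi> / f \<psi> \<psi>)"
  have "f r \<psi> = \<alpha> * f \<psi> \<psi>"
    using null_orthogonal[OF psi r] f_sym[OF r psi] by (auto simp: \<alpha>_def)
  then have "f (\<lambda>t. r t - \<alpha> * \<psi> t) \<psi> = 0"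
    using f_diff_left[OF r V_scale[OF psi] psi] f_scale_left[OF psi psi] by simp
  moreover have "f (\<lambda>t. r t - \<alpha> * \<psi> t) z = 0" if z: "z \<in> S" for z
    using f_diff_left[OF r V_scale[OF psi], of z] f_scale_left[OF psi, of z] S z r_orth psi_orth by auto
  ultimately show ?thesis using that by blast
qed

text \<open>Gram--Schmidt without normalisation; null directions are skipped.\<close>
lemma exists_orthogonal_projection_onto_span:
  assumes "finite I" "\<And>i. i \<in> I \<Longrightarrow> g i \<in> V" "u \<in> V"
  shows "\<exists>p\<in>lin_span I g. \<forall>w\<in>lin_span I g. f (\<lambda>t. u t - p t) w = 0"
  using assms
proof (induction I arbitrary: u rule: finite_induct)
  case empty
  have "lin_span {} g = {\<lambda>_. 0}" unfolding lin_span_def by auto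
  then show ?case using f_sym[OF empty(2) V_zero] f_zero_left[OF empty(2)] V_zero by auto
next
  case (insert j I)
  have gI: "\<And>i. i \<in> I \<Longrightarrow> g i \<in> V" and gj: "g j \<in> V" and uV: "u \<in> V" using insert by auto
  have linI: "lin_span I g \<subseteq> V" using lin_span_subset[OF insert(1) gI] .
  have mono: "lin_span I g \<subseteq> lin_span (insert j I) g" using lin_span_insert_mono[OF insert(2,1)] .
  obtain pu where pu: "pu \<in> lin_span I g" "\<forall>w\<in>lin_span I g. f (\<lambda>t. u t - pu t) w = 0"
    using insert.IH[OF gI uV] by blast
  obtain pg where pg: "pg \<in> lin_span I g" "\<forall>w\<in>lin_span I g. f (\<lambda>t. g j t - pg t) w = 0"
    using insert.IH[OF gI gj] by blast
  define \<psi> where "\<psi> = (\<lambda>t. g j t - pg t)"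
  have psiV: "\<psi> \<in> V" unfolding \<psi>_def using V_diff[OF gj] pg(1) linI by auto
  have upV: "(\<lambda>t. u t - pu t) \<in> V" using V_diff[OF uV] pu(1) linI by auto
  obtain \<alpha> where \<alpha>: "f (\<lambda>t. (u t - pu t) - \<alpha> * \<psi> t) \<psi> = 0"
      "\<And>z. z \<in> lin_span I g \<Longrightarrow> f (\<lambda>t. (u t - pu t) - \<alpha> * \<psi> t) z = 0"
    by (rule orthogonal_residual_add_direction[OF upV psiV linI]) (use pu(2) pg(2) in \<open>auto simp: \<psi>_def\<close>)
  define p where "p = (\<lambda>t. 1 * pu t + \<alpha> * \<psi> t)"
  have res: "(\<lambda>t. u t - p t) = (\<lambda>t. (u t - pu t) - \<alpha> * \<psi> t)" unfolding p_def by (simp add: algebra_simps)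
  have resV: "(\<lambda>t. u t - p t) \<in> V" unfolding res by (intro V_diff upV V_scale psiV)
  have psi_span: "\<psi> \<in> lin_span (insert j I) g"
    using lin_span_lincomb[OF lin_span_generator[of j "insert j I" g] subsetD[OF mono pg(1)], of 1 "-1"]
      insert(1) by (simp add: \<psi>_def)
  show ?case
  proof (intro bexI[of _ p] ballI)
    show "p \<in> lin_span (insert j I) g"
      unfolding p_def by (rule lin_span_lincomb[OF subsetD[OF mono pu(1)] psi_span])
    fix w assume "w \<in> lin_span (insert j I) g"
    then obtain a z where z: "z \<in> lin_span I g" and w: "w = (\<lambda>t. a * g j t + z t)"
      using lin_span_insertE[OF insert(2,1)] by blast
    have z': "(\<lambda>t. a * pg t + z t) \<in> lin_span I g" using lin_span_lincomb[OF pg(1) z, of a 1] by simp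
    have "w = (\<lambda>t. a * \<psi> t + 1 * (a * pg t + z t))" unfolding w \<psi>_def by (simp add: algebra_simps)
    then show "f (\<lambda>t. u t - p t) w = 0"
      using f_lincomb_right[OF psiV _ resV, of "\<lambda>t. a * pg t + z t" a 1] z' linI \<alpha> unfolding res by auto
  qed
qed

end

section \<open>Sampling by orthogonal functionals\<close>

definition sample_map ::
  "(('a \<Rightarrow> real) \<Rightarrow> ('a \<Rightarrow> real) \<Rightarrow> real) \<Rightarrow> (nat \<Rightarrow> 'a \<Rightarrow> real) \<Rightarrow> nat \<Rightarrow> ('a \<Rightarrow> real) \<Rightarrow> nat \<Rightarrow> real"
  where "sample_map f h N u = (\<lambda>n. if n \<in> {1..N} then f (h n) u else 0)"

definition consistent_set ::
  "('a \<Rightarrow> real) set \<Rightarrow> (('a \<Rightarrow> real) \<Rightarrow> ('a \<Rightarrow> real) \<Rightarrow> real) \<Rightarrow> (nat \<Rightarrow> 'a \<Rightarrow> real) \<Rightarrow> nat \<Rightarrow>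
    (nat \<Rightarrow> real) \<Rightarrow> ('a \<Rightarrow> real) set"
  where "consistent_set V f h N \<theta> = {u \<in> V. \<forall>n\<in>{1..N}. f (h n) u = \<theta> n}"

definition sample_inner ::
  "(('a \<Rightarrow> real) \<Rightarrow> ('a \<Rightarrow> real) \<Rightarrow> real) \<Rightarrow> (nat \<Rightarrow> 'a \<Rightarrow> real) \<Rightarrow> nat \<Rightarrow>
    (nat \<Rightarrow> real) \<Rightarrow> (nat \<Rightarrow> real) \<Rightarrow> real"
  where "sample_inner f h N x y = (\<Sum>n=1..N. x n * y n / (form_norm f (h n))^2)"

definition sample_norm ::
  "(('a \<Rightarrow> real) \<Rightarrow> ('a \<Rightarrow> real) \<Rightarrow> real) \<Rightarrow> (nat \<Rightarrow> 'a \<Rightarrow> real) \<Rightarrow> nat \<Rightarrow> (nat \<Rightarrow> real) \<Rightarrow> real"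
  where "sample_norm f h N x = sqrt (sample_inner f h N x x)"

definition sample_proj ::
  "(('a \<Rightarrow> real) \<Rightarrow> ('a \<Rightarrow> real) \<Rightarrow> real) \<Rightarrow> (nat \<Rightarrow> 'a \<Rightarrow> real) \<Rightarrow> nat \<Rightarrow> ('a \<Rightarrow> real) set \<Rightarrow>
    (nat \<Rightarrow> real) \<Rightarrow> nat \<Rightarrow> real"
  where "sample_proj f h N B = nearest_point (sample_inner f h N) (sample_map f h N ` B)"

definition sample_pinv ::
  "(('a \<Rightarrow> real) \<Rightarrow> ('a \<Rightarrow> real) \<Rightarrow> real) \<Rightarrow> (nat \<Rightarrow> 'a \<Rightarrow> real) \<Rightarrow> nat \<Rightarrow> ('a \<Rightarrow> real) set \<Rightarrow>
    (nat \<Rightarrow> real) \<Rightarrow> 'a \<Rightarrow> real"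
  where "sample_pinv f h N B w = (SOME u. u \<in> B \<and> sample_map f h N u = sample_proj f h N B w \<and>
      (\<forall>u'\<in>B. sample_map f h N u' = sample_proj f h N B w \<longrightarrow> form_norm f u \<le> form_norm f u'))"

lemma sample_inner_semi_inner: "semi_inner_space UNIV (sample_inner f h N)"
proof
  fix u v w :: "nat \<Rightarrow> real" and a b :: real
  show "sample_inner f h N (\<lambda>t. a * u t + b * v t) w = a * sample_inner f h N u w + b * sample_inner f h N v w"
    unfolding sample_inner_def
    by (simp add: sum.distrib sum_distrib_left add_divide_distrib distrib_right mult.assoc)
  show "sample_inner f h N u v = sample_inner f h N v u" unfolding sample_inner_def by (simp add: mult.commute)
  show "0 \<le> sample_inner f h N u u" unfolding sample_inner_def by (intro sum_nonneg) simp
qed auto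

lemma decrement_tendsto_zero:
  fixes a q :: "nat \<Rightarrow> real"
  assumes a: "\<And>k. 0 \<le> a k" and q: "\<And>k. 0 \<le> q k" and step: "\<And>k. a (Suc k) \<le> a k - q k"
  shows "q \<longlonglongrightarrow> 0"
proof -
  have "a (Suc k) \<le> a k" for k using step[of k] q[of k] by linarith
  then have "decseq a" by (rule decseq_SucI)
  then obtain L where L: "a \<longlonglongrightarrow> L" using decseq_convergent[of a 0] a by blast
  have "(\<lambda>k. a k - a (Suc k)) \<longlonglongrightarrow> L - L" by (intro tendsto_diff L LIMSEQ_Suc[OF L])
  then have "(\<lambda>k. a k - a (Suc k)) \<longlonglongrightarrow> 0" by simp
  moreover have "q k \<le> a k - a (Suc k)" for k using step[of k] by simp
  ultimately show ?thesis using q by (intro tendsto_sandwich[of "\<lambda>_. 0" q]) auto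
qed

locale sampling_setting = semi_inner_space V f for V :: "('a \<Rightarrow> real) set" and f +
  fixes B :: "('a \<Rightarrow> real) set" and h :: "nat \<Rightarrow> 'a \<Rightarrow> real" and N :: nat
    and b :: "nat \<Rightarrow> 'a \<Rightarrow> real"
  assumes B_subset: "B \<subseteq> V" and B_zero: "(\<lambda>_. 0) \<in> B"
    and B_lincomb: "u \<in> B \<Longrightarrow> v \<in> B \<Longrightarrow> (\<lambda>t. a * u t + c * v t) \<in> B"
    and h_V: "n \<in> {1..N} \<Longrightarrow> h n \<in> V"
    and h_orth: "m \<in> {1..N} \<Longrightarrow> n \<in> {1..N} \<Longrightarrow> m \<noteq> n \<Longrightarrow> f (h m) (h n) = 0"
    and h_pos: "n \<in> {1..N} \<Longrightarrow> f (h n) (h n) > 0"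
    and b_B: "n \<in> {1..N} \<Longrightarrow> b n \<in> B"
    and b_orth: "n \<in> {1..N} \<Longrightarrow> v \<in> B \<Longrightarrow> f (\<lambda>t. h n t - b n t) v = 0"
begin

abbreviation "g \<equiv> sample_inner f h N"
abbreviation "H \<equiv> sample_map f h N"

sublocale samples: semi_inner_space UNIV g by (rule sample_inner_semi_inner)

lemma B_V: "u \<in> B \<Longrightarrow> u \<in> V" using B_subset by auto

lemma b_V: "n \<in> {1..N} \<Longrightarrow> b n \<in> V" using b_B B_V by auto

lemma B_add: "u \<in> B \<Longrightarrow> v \<in> B \<Longrightarrow> (\<lambda>t. u t + v t) \<in> B"
  using B_lincomb[of u v 1 1] by simp

lemma B_diff: "u \<in> B \<Longrightarrow> v \<in> B \<Longrightarrow> (\<lambda>t. u t - v t) \<in> B"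
  using B_lincomb[of u v 1 "-1"] by simp

lemma B_sum: "finite I \<Longrightarrow> (\<And>i. i \<in> I \<Longrightarrow> u i \<in> B) \<Longrightarrow> (\<lambda>t. \<Sum>i\<in>I. c i * u i t) \<in> B"
proof (induction I rule: finite_induct)
  case empty then show ?case using B_zero by simp
next
  case (insert j I)
  then have "(\<lambda>t. c j * u j t + 1 * (\<Sum>i\<in>I. c i * u i t)) \<in> B" by (intro B_lincomb) auto
  then show ?case using insert by simp
qed

lemma sample_inner_eq: "g x y = (\<Sum>n=1..N. x n * y n / f (h n) (h n))"
  unfolding sample_inner_def form_norm_def by (intro sum.cong) (auto simp: less_imp_le[OF h_pos])

lemma sample_inner_cong:
  "(\<And>n. n \<in> {1..N} \<Longrightarrow> y n = y' n) \<Longrightarrow> g x y = g x y'"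
  unfolding sample_inner_def by (intro sum.cong) auto

lemma b_inner: "n \<in> {1..N} \<Longrightarrow> v \<in> B \<Longrightarrow> f (b n) v = f (h n) v"
  using b_orth[of n v] f_diff_left[OF h_V b_V B_V, of n n v] by simp

lemma sample_map_sum:
  assumes "finite I" "\<And>i. i \<in> I \<Longrightarrow> u i \<in> V"
  shows "H (\<lambda>t. \<Sum>i\<in>I. c i * u i t) = (\<lambda>n. \<Sum>i\<in>I. c i * H (u i) n)"
proof
  fix n show "H (\<lambda>t. \<Sum>i\<in>I. c i * u i t) n = (\<Sum>i\<in>I. c i * H (u i) n)"
    using f_sum_right[of I u "h n" c] assms h_V[of n] by (auto simp: sample_map_def)
qed

lemma sample_map_lincomb:
  "u \<in> V \<Longrightarrow> v \<in> V \<Longrightarrow> H (\<lambda>t. a * u t + c * v t) = (\<lambda>n. a * H u n + c * H v n)"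
  unfolding sample_map_def using f_lincomb_right h_V by auto

lemma sample_map_diff: "u \<in> V \<Longrightarrow> v \<in> V \<Longrightarrow> H (\<lambda>t. u t - v t) = (\<lambda>n. H u n - H v n)"
  using sample_map_lincomb[of u v 1 "-1"] by simp

lemma sample_map_null_equiv: "null_equiv u v \<Longrightarrow> u \<in> V \<Longrightarrow> v \<in> V \<Longrightarrow> H u = H v"
  unfolding sample_map_def using null_equiv_f_right h_V by auto

text \<open>\<open>sample_adjoint\<close> is the adjoint \<open>H\<^sup>*\<close> of the sampling map for the weighted inner product
  \<open>g\<close>, and \<open>band_adjoint r\<close> is its projection onto \<open>B\<close>.\<close>
definition sample_adjoint :: "(nat \<Rightarrow> real) \<Rightarrow> 'a \<Rightarrow> real" where
  "sample_adjoint r = (\<lambda>t. \<Sum>n\<in>{1..N}. (r n / f (h n) (h n)) * h n t)"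

definition band_adjoint :: "(nat \<Rightarrow> real) \<Rightarrow> 'a \<Rightarrow> real" where
  "band_adjoint r = (\<lambda>t. \<Sum>n\<in>{1..N}. (r n / f (h n) (h n)) * b n t)"

lemma sample_adjoint_V: "sample_adjoint r \<in> V"
  unfolding sample_adjoint_def by (rule V_sum) (auto simp: h_V)

lemma band_adjoint_B: "band_adjoint r \<in> B"
  unfolding band_adjoint_def by (rule B_sum) (auto simp: b_B)

lemma band_adjoint_V: "band_adjoint r \<in> V"
  using band_adjoint_B B_V by auto

lemma band_adjoint_diff: "band_adjoint (\<lambda>n. r n - s n) = (\<lambda>t. band_adjoint r t - band_adjoint s t)"
  unfolding band_adjoint_def by (auto simp: diff_divide_distrib left_diff_distrib sum_subtractf)

lemma sample_adjoint_inner: "v \<in> V \<Longrightarrow> f (sample_adjoint r) v = g r (H v)"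
  unfolding sample_adjoint_def sample_inner_eq
  by (subst f_sum_left) (auto simp: h_V sample_map_def intro: sum.cong)

lemma band_adjoint_inner: "v \<in> B \<Longrightarrow> f (band_adjoint r) v = g r (H v)"
  unfolding band_adjoint_def sample_inner_eq
  by (subst f_sum_left) (auto simp: b_V B_V b_inner sample_map_def intro: sum.cong)

lemma sample_map_sample_adjoint: "n \<in> {1..N} \<Longrightarrow> H (sample_adjoint r) n = r n"
proof -
  assume n: "n \<in> {1..N}"
  have "f (h n) (sample_adjoint r) = (\<Sum>m\<in>{1..N}. (r m / f (h m) (h m)) * f (h n) (h m))"
    unfolding sample_adjoint_def using n by (intro f_sum_right) (auto simp: h_V)
  also have "\<dots> = (\<Sum>m\<in>{1..N}. if m = n then r n else 0)"
    by (intro sum.cong) (use n h_pos in \<open>auto simp: h_orth less_imp_neq[symmetric]\<close>)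
  finally show ?thesis using n by (simp add: sample_map_def)
qed

lemma bessel_inequality:
  assumes v: "v \<in> V" shows "g (H v) (H v) \<le> f v v"
proof -
  define G where "G = sample_adjoint (H v)"
  have GV: "G \<in> V" unfolding G_def by (rule sample_adjoint_V)
  have "f v G = g (H v) (H v)"
    using sample_adjoint_inner[OF v] f_sym[OF v GV] unfolding G_def by simp
  moreover have "f G G = g (H v) (H v)"
    using sample_adjoint_inner[OF GV, of "H v"] sample_map_sample_adjoint
    by (auto simp: G_def intro: sample_inner_cong)
  moreover have "0 \<le> f (\<lambda>t. v t - G t) (\<lambda>t. v t - G t)" by (intro f_nonneg V_diff v GV)
  ultimately show ?thesis using f_expand_diff[OF v GV] by simp
qed

lemma residual_energy_decrease:
  "g (\<lambda>n. r n - H (band_adjoint r) n) (\<lambda>n. r n - H (band_adjoint r) n)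
     \<le> g r r - f (band_adjoint r) (band_adjoint r)"
proof -
  have "g (\<lambda>n. r n - H (band_adjoint r) n) (\<lambda>n. r n - H (band_adjoint r) n)
      = g r r - 2 * g r (H (band_adjoint r)) + g (H (band_adjoint r)) (H (band_adjoint r))"
    by (rule samples.f_expand_diff) auto
  moreover have "g (H (band_adjoint r)) (H (band_adjoint r)) \<le> f (band_adjoint r) (band_adjoint r)"
    by (rule bessel_inequality[OF band_adjoint_V])
  ultimately show ?thesis using band_adjoint_inner[OF band_adjoint_B, of r] by simp
qed

lemma exists_band_adjoint_same_samples:
  assumes v: "v \<in> B" shows "\<exists>r. H (band_adjoint r) = H v"
proof -
  obtain P where P: "P \<in> lin_span {1..N} b" "\<forall>w\<in>lin_span {1..N} b. f (\<lambda>t. v t - P t) w = 0"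
    using exists_orthogonal_projection_onto_span[of "{1..N}" b v] b_V B_V v by auto
  obtain c where c: "P = (\<lambda>t. \<Sum>n\<in>{1..N}. c n * b n t)" using P(1) unfolding lin_span_def by auto
  define r where "r n = c n * f (h n) (h n)" for n
  have P_eq: "P = band_adjoint r" unfolding c band_adjoint_def r_def
    by (intro ext sum.cong refl) (use h_pos in \<open>auto simp: less_imp_neq[symmetric]\<close>)
  have PB: "P \<in> B" unfolding P_eq by (rule band_adjoint_B)
  have "f (h n) v = f (h n) P" if n: "n \<in> {1..N}" for n
  proof -
    have "f (h n) (\<lambda>t. v t - P t) = f (\<lambda>t. v t - P t) (b n)"
      using b_inner[OF n B_diff[OF v PB]] f_sym[OF b_V[OF n] V_diff[OF B_V[OF v] B_V[OF PB]]] by simp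
    also have "\<dots> = 0" using P(2) lin_span_generator[of n "{1..N}" b] n by auto
    finally show ?thesis using f_diff_right[OF B_V[OF v] B_V[OF PB] h_V[OF n]] by simp
  qed
  then have "H (band_adjoint r) = H v" unfolding P_eq[symmetric] by (auto simp: sample_map_def)
  then show ?thesis by blast
qed

lemma sample_range_eq_span: "H ` B = lin_span {1..N} (\<lambda>n. H (b n))"
proof
  show "H ` B \<subseteq> lin_span {1..N} (\<lambda>n. H (b n))"
  proof
    fix y assume "y \<in> H ` B"
    then obtain v where v: "v \<in> B" "y = H v" by auto
    obtain r where "H (band_adjoint r) = H v" using exists_band_adjoint_same_samples[OF v(1)] ..
    moreover have "H (band_adjoint r) = (\<lambda>m. \<Sum>n\<in>{1..N}. (r n / f (h n) (h n)) * H (b n) m)"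
      unfolding band_adjoint_def by (rule sample_map_sum) (auto simp: b_V)
    ultimately have "y = (\<lambda>m. \<Sum>n\<in>{1..N}. (r n / f (h n) (h n)) * H (b n) m)" using v(2) by simp
    then show "y \<in> lin_span {1..N} (\<lambda>n. H (b n))"
      unfolding lin_span_def by (intro CollectI exI[of _ "\<lambda>n. r n / f (h n) (h n)"])
  qed
next
  show "lin_span {1..N} (\<lambda>n. H (b n)) \<subseteq> H ` B"
  proof
    fix y assume "y \<in> lin_span {1..N} (\<lambda>n. H (b n))"
    then obtain c where c: "y = (\<lambda>m. \<Sum>n\<in>{1..N}. c n * H (b n) m)" unfolding lin_span_def by auto
    have "y = H (\<lambda>t. \<Sum>n\<in>{1..N}. c n * b n t)" unfolding c by (rule sample_map_sum[symmetric]) (auto simp: b_V)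
    moreover have "(\<lambda>t. \<Sum>n\<in>{1..N}. c n * b n t) \<in> B" by (rule B_sum) (auto simp: b_B)
    ultimately show "y \<in> H ` B" by blast
  qed
qed

lemma sample_range_diff: "y \<in> H ` B \<Longrightarrow> z \<in> H ` B \<Longrightarrow> (\<lambda>n. y n - z n) \<in> H ` B"
  using lin_span_lincomb[of y "{1..N}" "\<lambda>n. H (b n)" z 1 "-1"] unfolding sample_range_eq_span by simp

lemma sample_proj_orthogonal:
  shows "sample_proj f h N B e \<in> H ` B"
    and "y \<in> H ` B \<Longrightarrow> g (\<lambda>n. e n - sample_proj f h N B e n) y = 0"
proof -
  obtain p where p: "p \<in> H ` B" "\<forall>w\<in>H ` B. g (\<lambda>n. e n - p n) w = 0"
    using samples.exists_orthogonal_projection_onto_span[of "{1..N}" "\<lambda>n. H (b n)" e]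
    unfolding sample_range_eq_span by auto
  have proj: "sample_proj f h N B e \<in> H ` B \<and> samples.null_equiv (sample_proj f h N B e) p"
    unfolding sample_proj_def
  proof (rule samples.nearest_point_null_equiv)
    fix w assume "w \<in> H ` B"
    then show "g (\<lambda>n. e n - p n) (\<lambda>n. p n - w n) = 0" using p sample_range_diff by blast
  qed (use p in auto)
  then show "sample_proj f h N B e \<in> H ` B" ..
  have "samples.null_equiv (\<lambda>n. e n - sample_proj f h N B e n) (\<lambda>n. e n - p n)"
    using samples.null_equiv_diff[OF samples.null_equiv_refl] proj by auto
  then show "g (\<lambda>n. e n - sample_proj f h N B e n) y = 0" if "y \<in> H ` B"
    using samples.null_equiv_f_left p(2) that by auto
qed

lemma sample_proj_pythagoras:
  "(sample_norm f h N (sample_proj f h N B e))^2 + (sample_norm f h N (\<lambda>n. e n - sample_proj f h N B e n))^2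
     = (sample_norm f h N e)^2"
proof -
  define p where "p = sample_proj f h N B e"
  have "g (\<lambda>n. e n - p n) p = 0"
    using sample_proj_orthogonal(2)[OF sample_proj_orthogonal(1)] unfolding p_def .
  then have "g p (\<lambda>n. e n - p n) = 0" using samples.f_sym by simp
  then have "g e e = g p p + g (\<lambda>n. e n - p n) (\<lambda>n. e n - p n)"
    using samples.f_expand_add[of p "\<lambda>n. e n - p n"] by simp
  then show ?thesis unfolding sample_norm_def p_def[symmetric] by (simp add: samples.f_nonneg)
qed

lemma sample_proj_norm_le: "sample_norm f h N (sample_proj f h N B e) \<le> sample_norm f h N e"
proof (rule power2_le_imp_le)
  show "(sample_norm f h N (sample_proj f h N B e))^2 \<le> (sample_norm f h N e)^2"
    using sample_proj_pythagoras[of e] zero_le_power2[of "sample_norm f h N (\<lambda>n. e n - sample_proj f h N B e n)"]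
    by linarith
qed (simp add: sample_norm_def samples.f_nonneg)

lemma band_adjoint_min_norm:
  assumes u: "u \<in> B" and samples: "H u = H (band_adjoint r)"
  shows "f u u = f (band_adjoint r) (band_adjoint r)
                 + f (\<lambda>t. u t - band_adjoint r t) (\<lambda>t. u t - band_adjoint r t)"
proof -
  let ?P = "band_adjoint r"
  have "H (\<lambda>t. u t - ?P t) = (\<lambda>_. 0)" using sample_map_diff[OF B_V[OF u] band_adjoint_V] samples by simp
  then have "f ?P (\<lambda>t. u t - ?P t) = 0"
    using band_adjoint_inner[OF B_diff[OF u band_adjoint_B]] by (simp add: sample_inner_def)
  then show ?thesis
    using f_expand_add[OF band_adjoint_V[of r] V_diff[OF B_V[OF u] band_adjoint_V[of r]]] by simp
qed

lemma sample_pinv_null_equiv: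
  assumes P: "H (band_adjoint r) = sample_proj f h N B w"
  shows "sample_pinv f h N B w \<in> B" and "null_equiv (sample_pinv f h N B w) (band_adjoint r)"
proof -
  let ?P = "band_adjoint r" and ?y = "sample_proj f h N B w"
  have "\<exists>u. u \<in> B \<and> H u = ?y \<and> (\<forall>u'\<in>B. H u' = ?y \<longrightarrow> form_norm f u \<le> form_norm f u')"
  proof (intro exI[of _ ?P] conjI ballI impI)
    fix u' assume "u' \<in> B" "H u' = ?y"
    then have "f ?P ?P \<le> f u' u'"
      using band_adjoint_min_norm[of u' r] P f_nonneg[OF V_diff[OF B_V band_adjoint_V]] by simp
    then show "form_norm f ?P \<le> form_norm f u'" unfolding form_norm_def by simp
  qed (use band_adjoint_B P in auto)
  then have "sample_pinv f h N B w \<in> B \<and> H (sample_pinv f h N B w) = ?y \<and>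
      (\<forall>u'\<in>B. H u' = ?y \<longrightarrow> form_norm f (sample_pinv f h N B w) \<le> form_norm f u')"
    unfolding sample_pinv_def by (rule someI_ex)
  then have u: "sample_pinv f h N B w \<in> B" "H (sample_pinv f h N B w) = ?y"
      "form_norm f (sample_pinv f h N B w) \<le> form_norm f ?P"
    using band_adjoint_B P by auto
  then show "sample_pinv f h N B w \<in> B" by simp
  have "f (sample_pinv f h N B w) (sample_pinv f h N B w) \<le> f ?P ?P"
    using u(3) f_nonneg[OF B_V[OF u(1)]] f_nonneg[OF band_adjoint_V] unfolding form_norm_def by simp
  then have "f (\<lambda>t. sample_pinv f h N B w t - ?P t) (\<lambda>t. sample_pinv f h N B w t - ?P t) = 0"
    using band_adjoint_min_norm[OF u(1) u(2)[folded P]]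
      f_nonneg[OF V_diff[OF B_V[OF u(1)] band_adjoint_V[of r]]] by linarith
  then show "null_equiv (sample_pinv f h N B w) ?P" unfolding null_equiv_def .
qed

section \<open>Alternating projections as a Landweber iteration\<close>

definition landweber :: "(nat \<Rightarrow> real) \<Rightarrow> nat \<Rightarrow> 'a \<Rightarrow> real" where
  "landweber \<theta> k = ((\<lambda>u t. u t + band_adjoint (\<lambda>n. \<theta> n - H u n) t) ^^ k) (\<lambda>_. 0)"

lemma landweber_0: "landweber \<theta> 0 = (\<lambda>_. 0)"
  unfolding landweber_def by simp

lemma landweber_Suc:
  "landweber \<theta> (Suc k) = (\<lambda>t. landweber \<theta> k t + band_adjoint (\<lambda>n. \<theta> n - H (landweber \<theta> k) n) t)"
  unfolding landweber_def by simp

lemma landweber_B: "landweber \<theta> k \<in> B"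
  by (induction k) (auto simp: landweber_0 landweber_Suc B_zero intro: B_add band_adjoint_B)

lemma nearest_consistent:
  fixes \<theta> :: "nat \<Rightarrow> real"
  assumes u: "u \<in> V" and w: "w \<in> V" and uw: "null_equiv u w"
  defines "C \<equiv> consistent_set V f h N \<theta>"
  shows "nearest_point f C u \<in> C \<and>
    null_equiv (nearest_point f C u) (\<lambda>t. w t + sample_adjoint (\<lambda>n. \<theta> n - H w n) t)"
proof -
  define p where "p = (\<lambda>t. w t + sample_adjoint (\<lambda>n. \<theta> n - H w n) t)"
  have pV: "p \<in> V" unfolding p_def by (intro V_add w sample_adjoint_V)
  have CV: "C \<subseteq> V" unfolding C_def consistent_set_def by auto
  have "f (h n) p = \<theta> n" if n: "n \<in> {1..N}" for n
    using f_add_right[OF w sample_adjoint_V h_V[OF n]] sample_map_sample_adjoint[OF n] n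
    by (simp add: p_def sample_map_def)
  then have pC: "p \<in> C" unfolding C_def consistent_set_def using pV by auto
  show ?thesis unfolding p_def[symmetric]
  proof (rule nearest_point_null_equiv[OF CV u pC])
    fix z assume z: "z \<in> C"
    have zV: "z \<in> V" using z CV by auto
    have dV: "(\<lambda>t. p t - z t) \<in> V" using V_diff[OF pV zV] .
    have "f (h n) (\<lambda>t. p t - z t) = 0" if n: "n \<in> {1..N}" for n
      using pC z n f_diff_right[OF pV zV h_V[OF n]] unfolding C_def consistent_set_def by auto
    then have "H (\<lambda>t. p t - z t) = (\<lambda>_. 0)" by (auto simp: sample_map_def)
    then have adj: "f (sample_adjoint (\<lambda>n. \<theta> n - H w n)) (\<lambda>t. p t - z t) = 0"
      using sample_adjoint_inner[OF dV] by (simp add: sample_inner_def)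
    have "null_equiv (\<lambda>t. u t - p t) (\<lambda>t. w t - p t)"
      by (rule null_equiv_diff[OF uw null_equiv_refl u w pV pV])
    then have "f (\<lambda>t. u t - p t) (\<lambda>t. p t - z t) = f (\<lambda>t. w t - p t) (\<lambda>t. p t - z t)"
      using null_equiv_f_left V_diff u w pV dV by blast
    also have "(\<lambda>t. w t - p t) = (\<lambda>t. -1 * sample_adjoint (\<lambda>n. \<theta> n - H w n) t)"
      unfolding p_def by auto
    finally show "f (\<lambda>t. u t - p t) (\<lambda>t. p t - z t) = 0"
      using f_scale_left[OF sample_adjoint_V dV, of "-1"] adj by simp
  qed
qed

lemma nearest_band:
  assumes p: "p \<in> V" and w: "w \<in> B" and pw: "null_equiv p (\<lambda>t. w t + sample_adjoint r t)"
  shows "nearest_point f B p \<in> B \<and> null_equiv (nearest_point f B p) (\<lambda>t. w t + band_adjoint r t)"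
proof -
  define q where "q = (\<lambda>t. w t + band_adjoint r t)"
  have qB: "q \<in> B" unfolding q_def by (intro B_add w band_adjoint_B)
  have wr: "(\<lambda>t. w t + sample_adjoint r t) \<in> V" by (intro V_add B_V[OF w] sample_adjoint_V)
  show ?thesis unfolding q_def[symmetric]
  proof (rule nearest_point_null_equiv[OF B_subset p qB])
    fix z assume z: "z \<in> B"
    have dB: "(\<lambda>t. q t - z t) \<in> B" by (rule B_diff[OF qB z])
    have "null_equiv (\<lambda>t. p t - q t) (\<lambda>t. (w t + sample_adjoint r t) - q t)"
      by (rule null_equiv_diff[OF pw null_equiv_refl p wr B_V[OF qB] B_V[OF qB]])
    then have "f (\<lambda>t. p t - q t) (\<lambda>t. q t - z t) =
        f (\<lambda>t. (w t + sample_adjoint r t) - q t) (\<lambda>t. q t - z t)"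
      using null_equiv_f_left V_diff p wr B_V[OF qB] B_V[OF dB] by blast
    also have "(\<lambda>t. (w t + sample_adjoint r t) - q t) = (\<lambda>t. sample_adjoint r t - band_adjoint r t)"
      unfolding q_def by auto
    also have "f \<dots> (\<lambda>t. q t - z t) = 0"
      using f_diff_left[OF sample_adjoint_V band_adjoint_V B_V[OF dB]]
        sample_adjoint_inner[OF B_V[OF dB]] band_adjoint_inner[OF dB] by simp
    finally show "f (\<lambda>t. p t - q t) (\<lambda>t. q t - z t) = 0" .
  qed
qed

lemma alternating_projections_landweber:
  fixes \<theta> :: "nat \<Rightarrow> real"
  defines "F \<equiv> nearest_point f B \<circ> nearest_point f (consistent_set V f h N \<theta>)"
  shows "(F ^^ k) (\<lambda>_. 0) \<in> B \<and> null_equiv ((F ^^ k) (\<lambda>_. 0)) (landweber \<theta> k)"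
proof (induction k)
  case 0 show ?case using B_zero null_equiv_refl by (simp add: landweber_0)
next
  case (Suc k)
  define C where "C = consistent_set V f h N \<theta>"
  let ?u = "(F ^^ k) (\<lambda>_. 0)" and ?w = "landweber \<theta> k"
  have u: "?u \<in> B" "null_equiv ?u ?w" using Suc by auto
  have CV: "C \<subseteq> V" unfolding C_def consistent_set_def by auto
  have c: "nearest_point f C ?u \<in> C \<and>
      null_equiv (nearest_point f C ?u) (\<lambda>t. ?w t + sample_adjoint (\<lambda>n. \<theta> n - H ?w n) t)"
    unfolding C_def by (rule nearest_consistent[OF B_V[OF u(1)] B_V[OF landweber_B] u(2)])
  have "nearest_point f B (nearest_point f C ?u) \<in> B \<and>
      null_equiv (nearest_point f B (nearest_point f C ?u)) (landweber \<theta> (Suc k))"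
    unfolding landweber_Suc using c CV by (intro nearest_band[OF _ landweber_B]) auto
  moreover have "(F ^^ Suc k) (\<lambda>_. 0) = nearest_point f B (nearest_point f C ?u)"
    by (simp add: F_def C_def)
  ultimately show ?case by (simp only:)
qed

definition residual :: "(nat \<Rightarrow> real) \<Rightarrow> nat \<Rightarrow> nat \<Rightarrow> real" where
  "residual p k = ((\<lambda>s n. s n - H (band_adjoint s) n) ^^ k) (\<lambda>n. - p n)"

lemma residual_0: "residual p 0 = (\<lambda>n. - p n)"
  unfolding residual_def by simp

lemma residual_Suc: "residual p (Suc k) = (\<lambda>n. residual p k n - H (band_adjoint (residual p k)) n)"
  unfolding residual_def by simp

text \<open>The hypothesis says that \<open>band_adjoint p\<close> solves the normal equations; its data misfit
  then contributes only a null function to every step.\<close>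
lemma landweber_error:
  assumes orth: "\<And>y. y \<in> H ` B \<Longrightarrow> g (\<lambda>n. \<theta> n - H (band_adjoint p) n) y = 0"
  shows "null_equiv (\<lambda>t. landweber \<theta> k t - band_adjoint p t) (band_adjoint (residual p k))"
proof (induction k)
  case 0
  have "band_adjoint (\<lambda>n. - p n) = (\<lambda>t. - band_adjoint p t)"
    unfolding band_adjoint_def by (auto simp: sum_negf[symmetric])
  then show ?case by (simp add: landweber_0 residual_0 null_equiv_refl)
next
  case (Suc k)
  let ?P = "band_adjoint p" and ?r = "residual p k"
  define ek where "ek = (\<lambda>t. landweber \<theta> k t - ?P t)"
  define Z where "Z = band_adjoint (\<lambda>n. \<theta> n - H ?P n)"
  have ekV: "ek \<in> V" unfolding ek_def by (intro V_diff B_V[OF landweber_B] band_adjoint_V)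
  have "H (landweber \<theta> k) = (\<lambda>n. 1 * H ?P n + 1 * H ek n)"
    using sample_map_lincomb[OF band_adjoint_V ekV, of 1 p 1] by (simp add: ek_def)
  also have "H ek = H (band_adjoint ?r)"
    using sample_map_null_equiv[OF Suc[folded ek_def] ekV band_adjoint_V] .
  finally have "band_adjoint (\<lambda>n. \<theta> n - H (landweber \<theta> k) n) =
      (\<lambda>t. Z t - band_adjoint (H (band_adjoint ?r)) t)"
    unfolding Z_def by (simp add: band_adjoint_diff[symmetric] algebra_simps)
  then have step: "(\<lambda>t. landweber \<theta> (Suc k) t - ?P t) = (\<lambda>t. (ek t + Z t) - band_adjoint (H (band_adjoint ?r)) t)"
    unfolding landweber_Suc ek_def by auto
  have "f Z Z = 0"
    using band_adjoint_inner[OF band_adjoint_B] orth[OF imageI[OF band_adjoint_B]] unfolding Z_def by simp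
  then have Z0: "null_equiv Z (\<lambda>_. 0)" by (simp add: null_equiv_def)
  have "null_equiv (\<lambda>t. ek t + Z t) (\<lambda>t. band_adjoint ?r t + 0)"
    by (rule null_equiv_add[OF Suc[folded ek_def] Z0 ekV band_adjoint_V]) (auto simp: Z_def band_adjoint_V V_zero)
  then have "null_equiv (\<lambda>t. (ek t + Z t) - band_adjoint (H (band_adjoint ?r)) t)
      (\<lambda>t. (band_adjoint ?r t + 0) - band_adjoint (H (band_adjoint ?r)) t)"
    by (rule null_equiv_diff[OF _ null_equiv_refl])
      (auto intro: V_add ekV band_adjoint_V simp: Z_def)
  then show ?case unfolding step residual_Suc band_adjoint_diff by simp
qed

lemma residual_energy_tendsto_zero:
  "(\<lambda>k. f (band_adjoint (residual p k)) (band_adjoint (residual p k))) \<longlonglongrightarrow> 0"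
proof (rule decrement_tendsto_zero[where a = "\<lambda>k. g (residual p k) (residual p k)"])
  fix k
  show "0 \<le> g (residual p k) (residual p k)" by (rule samples.f_nonneg) simp
  show "0 \<le> f (band_adjoint (residual p k)) (band_adjoint (residual p k))"
    by (rule f_nonneg[OF band_adjoint_V])
  show "g (residual p (Suc k)) (residual p (Suc k))
      \<le> g (residual p k) (residual p k) - f (band_adjoint (residual p k)) (band_adjoint (residual p k))"
    unfolding residual_Suc by (rule residual_energy_decrease)
qed

theorem alternating_projections_tendsto_pinv:
  fixes e :: "nat \<Rightarrow> real"
  assumes x: "x \<in> B"
  defines "\<theta> \<equiv> \<lambda>n. H x n - e n" and "ebar \<equiv> sample_proj f h N B e"
  shows "(\<lambda>k. form_norm f (\<lambda>s. ((nearest_point f B \<circ> nearest_point f (consistent_set V f h N \<theta>)) ^^ k) (\<lambda>_. 0) s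
              - sample_pinv f h N B (\<lambda>n. H x n - ebar n) s)) \<longlonglongrightarrow> 0"
proof -
  define y where "y = (\<lambda>n. H x n - ebar n)"
  define u where "u k = ((nearest_point f B \<circ> nearest_point f (consistent_set V f h N \<theta>)) ^^ k) (\<lambda>_. 0)" for k
  obtain v where v: "v \<in> B" "sample_proj f h N B y = H v" using sample_proj_orthogonal(1) ..
  obtain p where p: "H (band_adjoint p) = sample_proj f h N B y"
    using exists_band_adjoint_same_samples[OF v(1)] unfolding v(2) ..
  let ?P = "band_adjoint p" and ?pinv = "sample_pinv f h N B y"
  have "g (\<lambda>n. \<theta> n - H ?P n) z = 0" if z: "z \<in> H ` B" for z
  proof -
    have "(\<lambda>n. \<theta> n - H ?P n) =
        (\<lambda>n. 1 * (y n - sample_proj f h N B y n) + (-1) * (e n - ebar n))"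
      unfolding p \<theta>_def y_def by (auto simp: algebra_simps)
    then have "g (\<lambda>n. \<theta> n - H ?P n) z =
        1 * g (\<lambda>n. y n - sample_proj f h N B y n) z + (-1) * g (\<lambda>n. e n - ebar n) z"
      by (simp only: samples.f_lincomb_left UNIV_I)
    then show ?thesis using sample_proj_orthogonal(2)[OF z] unfolding ebar_def by simp
  qed
  then have err: "null_equiv (\<lambda>t. landweber \<theta> k t - ?P t) (band_adjoint (residual p k))" for k
    by (rule landweber_error)
  have pinv: "?pinv \<in> B" "null_equiv ?pinv ?P" using sample_pinv_null_equiv[OF p] by auto
  have "f (\<lambda>s. u k s - ?pinv s) (\<lambda>s. u k s - ?pinv s) =
      f (band_adjoint (residual p k)) (band_adjoint (residual p k))" for k
  proof -
    have uk: "u k \<in> B" "null_equiv (u k) (landweber \<theta> k)"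
      using alternating_projections_landweber unfolding u_def by auto
    have ukV: "(\<lambda>s. u k s - ?pinv s) \<in> V" by (intro V_diff B_V uk(1) pinv(1))
    have wkV: "(\<lambda>t. landweber \<theta> k t - ?P t) \<in> V" by (intro V_diff B_V landweber_B band_adjoint_B)
    have "null_equiv (\<lambda>s. u k s - ?pinv s) (\<lambda>t. landweber \<theta> k t - ?P t)"
      by (rule null_equiv_diff[OF uk(2) pinv(2) B_V[OF uk(1)] B_V[OF landweber_B] B_V[OF pinv(1)] band_adjoint_V])
    then have "null_equiv (\<lambda>s. u k s - ?pinv s) (band_adjoint (residual p k))"
      by (rule null_equiv_trans[OF _ err ukV wkV band_adjoint_V])
    then show ?thesis by (rule null_equiv_norm[OF _ ukV band_adjoint_V])
  qed
  then show ?thesis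
    using tendsto_real_sqrt[OF residual_energy_tendsto_zero[of p]]
    unfolding form_norm_def u_def y_def by simp
qed

end

section \<open>Square-integrable signals\<close>

lemma abs_mult_le_sum_squares: "\<bar>a * b\<bar> \<le> a^2 + b^2" for a b :: real
proof -
  have "0 \<le> (\<bar>a\<bar> - \<bar>b\<bar>)^2" by simp
  then have "2*(\<bar>a\<bar>*\<bar>b\<bar>) \<le> \<bar>a\<bar>^2 + \<bar>b\<bar>^2" by (simp add: power2_eq_square algebra_simps)
  moreover have "0 \<le> \<bar>a\<bar>*\<bar>b\<bar>" by simp
  ultimately have "\<bar>a\<bar>*\<bar>b\<bar> \<le> a^2 + b^2" using power2_abs[of a] power2_abs[of b] by linarith
  then show ?thesis by (simp add: abs_mult)
qed

lemma L2_measurable: "u \<in> L2 D \<Longrightarrow> u \<in> borel_measurable lborel" unfolding L2_def by auto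
lemma L2_square_integrable: "u \<in> L2 D \<Longrightarrow> set_integrable lborel D (\<lambda>t. (u t)^2)" unfolding L2_def by auto

lemma L2_mult_integrable:
  assumes D: "D \<in> sets lborel" and u: "u \<in> L2 D" and v: "v \<in> L2 D"
  shows "set_integrable lborel D (\<lambda>t. u t * v t)"
proof (rule set_integrable_bound[of _ _ "\<lambda>t. (u t)^2 + (v t)^2"])
  show "set_integrable lborel D (\<lambda>t. (u t)^2 + (v t)^2)"
    using L2_square_integrable[OF u] L2_square_integrable[OF v] by (rule set_integral_add)
  have "u \<in> borel_measurable lborel" "v \<in> borel_measurable lborel" using u v L2_measurable by auto
  then show "set_borel_measurable lborel D (\<lambda>t. u t * v t)"
    unfolding set_borel_measurable_def using D by measurable
  show "AE x\<in>D in lborel. norm (u x * v x) \<le> norm ((u x)^2 + (v x)^2)"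
    using abs_mult_le_sum_squares by auto
qed

lemma L2_semi_inner_space:
  assumes D: "D \<in> sets lborel"
  shows "semi_inner_space (L2 D) (ip D)"
proof
  show "(\<lambda>_. 0) \<in> L2 D" unfolding L2_def by (simp add: set_integrable_def)
  fix u v w :: "real \<Rightarrow> real" and a b :: real
  assume u: "u \<in> L2 D" and v: "v \<in> L2 D"
  have mu: "u \<in> borel_measurable lborel" and mv: "v \<in> borel_measurable lborel" using u v L2_measurable by auto
  have "set_integrable lborel D (\<lambda>t. (a^2) * (u t)^2 + ((2*a*b) * (u t * v t) + (b^2) * (v t)^2))"
    by (intro set_integral_add set_integrable_mult_right L2_square_integrable u v L2_mult_integrable[OF D u v])
  moreover have "(\<lambda>t. (a * u t + b * v t)^2) = (\<lambda>t. (a^2) * (u t)^2 + ((2*a*b) * (u t * v t) + (b^2) * (v t)^2))"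
    by (auto simp: power2_eq_square algebra_simps)
  ultimately show "(\<lambda>t. a * u t + b * v t) \<in> L2 D" unfolding L2_def using mu mv by auto
  show "ip D u v = ip D v u" unfolding ip_def by (simp add: mult.commute)
  show "0 \<le> ip D u u" unfolding ip_def set_lebesgue_integral_def
    by (intro integral_nonneg_AE) (auto simp: indicator_def)
  assume w: "w \<in> L2 D"
  have "ip D (\<lambda>t. a * u t + b * v t) w = (LINT t:D|lborel. a * (u t * w t) + b * (v t * w t))"
    unfolding ip_def by (simp add: algebra_simps)
  also have "\<dots> = (LINT t:D|lborel. a * (u t * w t)) + (LINT t:D|lborel. b * (v t * w t))"
    by (intro set_integral_add set_integrable_mult_right L2_mult_integrable[OF D u w] L2_mult_integrable[OF D v w])
  also have "\<dots> = a * ip D u w + b * ip D v w" unfolding ip_def by (simp add: set_integral_mult_right)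
  finally show "ip D (\<lambda>t. a * u t + b * v t) w = a * ip D u w + b * ip D v w" .
qed


section \<open>The sampling functionals\<close>

lemma tt_less:
  assumes tm: "\<And>n. n < N \<Longrightarrow> tt n < tt (Suc n)"
  shows "i < j \<Longrightarrow> j \<le> N \<Longrightarrow> (tt i :: real) < tt j"
proof (induction j)
  case 0 then show ?case by simp
next
  case (Suc j)
  show ?case
  proof (cases "i = j")
    case True then show ?thesis using tm Suc by auto
  next
    case False then have "tt i < tt j" using Suc by auto
    also have "tt j < tt (Suc j)" using tm Suc by auto
    finally show ?thesis .
  qed
qed

lemma tt_le:
  assumes tm: "\<And>n. n < N \<Longrightarrow> tt n < tt (Suc n)"
  shows "i \<le> j \<Longrightarrow> j \<le> N \<Longrightarrow> (tt i :: real) \<le> tt j"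
  using tt_less[of N tt, OF tm, of i j] by (cases "i = j") auto

lemma dset_sets: "dset dm \<in> sets lborel" by (cases dm) auto

lemma hfun_interval_subset_dset:
  assumes tm: "\<And>n. n < N \<Longrightarrow> tt n < tt (Suc n)" and t0: "tt 0 = 0" and tN: "tt N \<in> dset dm"
    and n: "n \<in> {1..N}"
  shows "{tt (n-1)..tt n} \<subseteq> dset dm"
proof (cases dm)
  case RealLine then show ?thesis by simp
next
  case (Interval T)
  have "0 \<le> tt (n-1)" using tt_le[of N tt, OF tm, of 0 "n-1"] t0 n by auto
  moreover have "tt n \<le> tt N" using tt_le[of N tt, OF tm, of n N] n by auto
  ultimately show ?thesis using tN Interval by auto
qed

lemma hfun_measurable[measurable]: "hfun \<alpha> tt n \<in> borel_measurable lborel"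
  unfolding hfun_def by measurable

lemma hfun_nonneg: "0 \<le> hfun \<alpha> tt n s" unfolding hfun_def by (simp add: indicator_def)

lemma hfun_le_indicator: "\<alpha> \<ge> 0 \<Longrightarrow> hfun \<alpha> tt n s \<le> indicator {tt (n-1)..tt n} s"
  unfolding hfun_def by (auto simp: indicator_def mult_nonneg_nonneg)

lemma hfun_zero: "s \<notin> {tt (n-1)..<tt n} \<Longrightarrow> hfun \<alpha> tt n s = 0"
  unfolding hfun_def by simp

lemma hfun_L2:
  assumes "\<alpha> \<ge> 0" and that: "D \<in> sets lborel" shows "hfun \<alpha> tt n \<in> L2 D"
proof -
  have "integrable lborel (\<lambda>x. indicator D x *\<^sub>R (hfun \<alpha> tt n x)^2)"
  proof (rule Bochner_Integration.integrable_bound[OF integrable_real_indicator[of "{tt (n-1)..tt n}"]])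
    show "{tt (n-1)..tt n} \<in> sets lborel" by simp
    show "emeasure lborel {tt (n-1)..tt n} < \<infinity>" by (simp add: emeasure_lborel_Icc_eq)
    show "(\<lambda>x. indicator D x *\<^sub>R (hfun \<alpha> tt n x)^2) \<in> borel_measurable lborel" using that by measurable
    have "norm (indicator D x *\<^sub>R (hfun \<alpha> tt n x)^2) \<le> norm (indicator {tt (n-1)..tt n} x :: real)" for x
    proof -
      have "0 \<le> hfun \<alpha> tt n x" "hfun \<alpha> tt n x \<le> indicator {tt (n-1)..tt n} x"
        using hfun_nonneg hfun_le_indicator[OF assms(1)] by auto
      then have "(hfun \<alpha> tt n x)^2 \<le> indicator {tt (n-1)..tt n} x"
        by (auto simp: indicator_def power2_eq_square mult_le_one)
      then show ?thesis by (auto simp: indicator_def)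
    qed
    then show "AE x in lborel. norm (indicator D x *\<^sub>R (hfun \<alpha> tt n x)^2) \<le> norm (indicator {tt (n-1)..tt n} x :: real)"
      by auto
  qed
  then show ?thesis unfolding L2_def set_integrable_def by auto
qed

lemma hfun_orth:
  assumes tm: "\<And>n. n < N \<Longrightarrow> tt n < tt (Suc n)"
    and m: "m \<in> {1..N}" and n: "n \<in> {1..N}" and mn: "m \<noteq> n"
  shows "ip D (hfun \<alpha> tt m) (hfun \<alpha> tt n) = 0"
proof -
  have z: "hfun \<alpha> tt m s * hfun \<alpha> tt n s = 0" for s
  proof (cases "m < n")
    case True
    have "tt m \<le> tt (n-1)" using tt_le[of N tt, OF tm, of m "n-1"] True n by auto
    then have "s \<notin> {tt (m-1)..<tt m} \<or> s \<notin> {tt (n-1)..<tt n}" by auto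
    then show ?thesis using hfun_zero by auto
  next
    case False then have "n < m" using mn by auto
    have "tt n \<le> tt (m-1)" using tt_le[of N tt, OF tm, of n "m-1"] \<open>n < m\<close> m by auto
    then have "s \<notin> {tt (m-1)..<tt m} \<or> s \<notin> {tt (n-1)..<tt n}" by auto
    then show ?thesis using hfun_zero by auto
  qed
  show ?thesis unfolding ip_def z by simp
qed

lemma hfun_pos:
  assumes tm: "\<And>n. n < N \<Longrightarrow> tt n < tt (Suc n)" and t0: "tt 0 = 0" and tN: "tt N \<in> dset dm"
    and n: "n \<in> {1..N}" and al: "\<alpha> \<ge> 0"
  shows "ip (dset dm) (hfun \<alpha> tt n) (hfun \<alpha> tt n) > 0"
proof -
  define a where "a = tt (n-1)"
  define c where "c = tt n"
  have ac: "a < c" unfolding a_def c_def using tt_less[of N tt, OF tm, of "n-1" n] n by auto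
  have sub: "{a..c} \<subseteq> dset dm" unfolding a_def c_def by (rule hfun_interval_subset_dset[OF tm t0 tN n])
  define m0 where "m0 = exp (-2 * \<alpha> * (c - a))"
  have m0: "m0 > 0" unfolding m0_def by simp
  have L2: "hfun \<alpha> tt n \<in> L2 (dset dm)" using hfun_L2[OF al dset_sets] .
  have int1: "integrable lborel (\<lambda>x. indicator (dset dm) x *\<^sub>R (hfun \<alpha> tt n x * hfun \<alpha> tt n x))"
    using L2_square_integrable[OF L2] unfolding set_integrable_def by (simp add: power2_eq_square)
  have int2: "integrable lborel (\<lambda>x. m0 * indicator {a..<c} x)"
    by (intro integrable_mult_right integrable_real_indicator) (use ac in auto)
  have le: "m0 * indicator {a..<c} x \<le> indicator (dset dm) x *\<^sub>R (hfun \<alpha> tt n x * hfun \<alpha> tt n x)" for x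
  proof (cases "x \<in> {a..<c}")
    case True
    then have xD: "x \<in> dset dm" using sub by auto
    have "hfun \<alpha> tt n x = exp (- \<alpha> * (c - x))" using True unfolding hfun_def a_def c_def by simp
    then have "hfun \<alpha> tt n x * hfun \<alpha> tt n x = exp (-2 * \<alpha> * (c - x))" by (simp add: exp_add[symmetric])
    moreover have "-2 * \<alpha> * (c - a) \<le> -2 * \<alpha> * (c - x)" using True al by (auto intro: mult_left_mono)
    ultimately show ?thesis using True xD unfolding m0_def by simp
  next
    case False then show ?thesis using hfun_nonneg by (auto simp: indicator_def)
  qed
  have "integral\<^sup>L lborel (\<lambda>x. m0 * indicator {a..<c} x) = m0 * (c - a)"
    using ac by simp
  moreover have "integral\<^sup>L lborel (\<lambda>x. m0 * indicator {a..<c} x) \<le> ip (dset dm) (hfun \<alpha> tt n) (hfun \<alpha> tt n)"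
    unfolding ip_def set_lebesgue_integral_def by (rule integral_mono[OF int2 int1 le])
  moreover have "0 < m0 * (c - a)" using m0 ac by simp
  ultimately show ?thesis by linarith
qed

section \<open>Bandlimited signals\<close>

lemma le_one_plus_square: "x \<le> 1 + x^2" for x :: real
proof -
  have "0 \<le> (x - 1/2)^2" by simp
  then show ?thesis by (simp add: power2_eq_square algebra_simps)
qed

lemma spectrum_integrable:
  assumes F: "F \<in> borel_measurable lborel" "set_integrable lborel {-pi..pi} (\<lambda>w. (cmod (F w))^2)"
  shows "set_integrable lborel {-pi..pi} (\<lambda>w. F w * exp (\<i> * complex_of_real (w * t)))"
proof (rule set_integrable_bound[of _ _ "\<lambda>w. 1 + (cmod (F w))^2"])
  show "set_integrable lborel {-pi..pi} (\<lambda>w. 1 + (cmod (F w))^2)"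
    by (intro set_integral_add F(2) borel_integrable_atLeastAtMost' continuous_on_const)
  show "set_borel_measurable lborel {-pi..pi} (\<lambda>w. F w * exp (\<i> * complex_of_real (w * t)))"
    unfolding set_borel_measurable_def using F(1) by measurable
  show "AE w\<in>{-pi..pi} in lborel. norm (F w * exp (\<i> * complex_of_real (w * t))) \<le> norm (1 + (cmod (F w))^2)"
    using le_one_plus_square by (auto simp: norm_mult norm_exp_i_times)
qed

lemma cmod_lincomb_square_le: "(cmod (complex_of_real a * x + complex_of_real b * y))^2 \<le> 2 * a^2 * (cmod x)^2 + 2 * b^2 * (cmod y)^2"
proof -
  have "cmod (complex_of_real a * x + complex_of_real b * y) \<le> \<bar>a\<bar> * cmod x + \<bar>b\<bar> * cmod y"
    by (rule order_trans[OF norm_triangle_ineq]) (simp add: norm_mult)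
  then have "(cmod (complex_of_real a * x + complex_of_real b * y))^2 \<le> (\<bar>a\<bar> * cmod x + \<bar>b\<bar> * cmod y)^2"
    by (intro power_mono) auto
  also have "\<dots> \<le> 2 * (\<bar>a\<bar> * cmod x)^2 + 2 * (\<bar>b\<bar> * cmod y)^2"
  proof -
    have "0 \<le> (\<bar>a\<bar> * cmod x - \<bar>b\<bar> * cmod y)^2" by simp
    then show ?thesis unfolding power2_diff power2_sum by linarith
  qed
  also have "\<dots> = 2 * a^2 * (cmod x)^2 + 2 * b^2 * (cmod y)^2" by (simp add: power_mult_distrib)
  finally show ?thesis .
qed

lemma BL_zero: "(\<lambda>_. 0) \<in> BL dm"
proof -
  have "(\<lambda>_. 0) \<in> L2 (dset dm)" using semi_inner_space.V_zero[OF L2_semi_inner_space[OF dset_sets]] .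
  moreover have "bandlimited dm (\<lambda>_. 0)"
  proof (cases dm)
    case RealLine then show ?thesis
      by (auto intro!: exI[of _ "\<lambda>_. 0"] simp: set_integrable_def set_lebesgue_integral_def)
  next
    case (Interval T) then show ?thesis by (auto intro!: exI[of _ "\<lambda>_. 0"])
  qed
  ultimately show ?thesis unfolding BL_def by auto
qed

lemma bandlimited_Interval_lincomb:
  assumes "bandlimited (Interval T) u" "bandlimited (Interval T) v"
  shows "bandlimited (Interval T) (\<lambda>t. a * u t + b * v t)"
proof -
  obtain a1 b1 where 1: "\<forall>t\<in>{0..real T}. u t = a1 0 + (\<Sum>k=1..(T - 1) div 2.
      a1 k * cos (2 * pi * real k * t / real T) + b1 k * sin (2 * pi * real k * t / real T))"
    using assms(1) by auto
  obtain a2 b2 where 2: "\<forall>t\<in>{0..real T}. v t = a2 0 + (\<Sum>k=1..(T - 1) div 2.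
      a2 k * cos (2 * pi * real k * t / real T) + b2 k * sin (2 * pi * real k * t / real T))"
    using assms(2) by auto
  show ?thesis unfolding bandlimited.simps
    by (rule exI[of _ "\<lambda>k. a * a1 k + b * a2 k"], rule exI[of _ "\<lambda>k. a * b1 k + b * b2 k"])
      (use 1 2 in \<open>auto simp: algebra_simps sum.distrib sum_distrib_left\<close>)
qed

lemma spectrum_lincomb_square_integrable:
  assumes F: "F \<in> borel_measurable lborel" "set_integrable lborel {-pi..pi} (\<lambda>w. (cmod (F w))^2)"
    and G: "G \<in> borel_measurable lborel" "set_integrable lborel {-pi..pi} (\<lambda>w. (cmod (G w))^2)"
  shows "set_integrable lborel {-pi..pi}
    (\<lambda>w. (cmod (complex_of_real a * F w + complex_of_real b * G w))^2)"
proof (rule set_integrable_bound[of _ _ "\<lambda>w. 2 * a^2 * (cmod (F w))^2 + 2 * b^2 * (cmod (G w))^2"])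
  have "set_integrable lborel {-pi..pi} (\<lambda>w. (2 * a^2) * (cmod (F w))^2 + (2 * b^2) * (cmod (G w))^2)"
    by (intro set_integral_add set_integrable_mult_right F(2) G(2))
  then show "set_integrable lborel {-pi..pi} (\<lambda>w. 2 * a^2 * (cmod (F w))^2 + 2 * b^2 * (cmod (G w))^2)"
    by (simp add: mult.assoc)
  show "set_borel_measurable lborel {-pi..pi} (\<lambda>w. (cmod (complex_of_real a * F w + complex_of_real b * G w))^2)"
    unfolding set_borel_measurable_def using F(1) G(1) by measurable
  show "AE w\<in>{-pi..pi} in lborel. norm ((cmod (complex_of_real a * F w + complex_of_real b * G w))^2)
      \<le> norm (2 * a^2 * (cmod (F w))^2 + 2 * b^2 * (cmod (G w))^2)"
    using cmod_lincomb_square_le by (auto intro!: order_trans[OF _ abs_ge_self])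
qed

lemma bandlimited_RealLine_lincomb:
  assumes "bandlimited RealLine u" "bandlimited RealLine v"
  shows "bandlimited RealLine (\<lambda>t. a * u t + b * v t)"
proof -
  obtain F where F: "F \<in> borel_measurable lborel" "set_integrable lborel {-pi..pi} (\<lambda>w. (cmod (F w))^2)"
    "\<And>t. complex_of_real (u t) = set_lebesgue_integral lborel {-pi..pi} (\<lambda>w. F w * exp (\<i> * complex_of_real (w * t)))"
    using assms(1) by auto
  obtain G where G: "G \<in> borel_measurable lborel" "set_integrable lborel {-pi..pi} (\<lambda>w. (cmod (G w))^2)"
    "\<And>t. complex_of_real (v t) = set_lebesgue_integral lborel {-pi..pi} (\<lambda>w. G w * exp (\<i> * complex_of_real (w * t)))"
    using assms(2) by auto
  define H where "H w = complex_of_real a * F w + complex_of_real b * G w" for w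
  have "complex_of_real (a * u t + b * v t) =
      set_lebesgue_integral lborel {-pi..pi} (\<lambda>w. H w * exp (\<i> * complex_of_real (w * t)))" for t
  proof -
    have "complex_of_real (a * u t + b * v t) =
        complex_of_real a * set_lebesgue_integral lborel {-pi..pi} (\<lambda>w. F w * exp (\<i> * complex_of_real (w * t)))
        + complex_of_real b * set_lebesgue_integral lborel {-pi..pi} (\<lambda>w. G w * exp (\<i> * complex_of_real (w * t)))"
      using F(3) G(3) by simp
    also have "\<dots> = set_lebesgue_integral lborel {-pi..pi} (\<lambda>w. complex_of_real a * (F w * exp (\<i> * complex_of_real (w * t))))
        + set_lebesgue_integral lborel {-pi..pi} (\<lambda>w. complex_of_real b * (G w * exp (\<i> * complex_of_real (w * t))))"
      by (simp add: set_integral_mult_right)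
    also have "\<dots> = set_lebesgue_integral lborel {-pi..pi} (\<lambda>w. complex_of_real a * (F w * exp (\<i> * complex_of_real (w * t)))
        + complex_of_real b * (G w * exp (\<i> * complex_of_real (w * t))))"
      by (intro set_integral_add(2)[symmetric] set_integrable_mult_right spectrum_integrable F(1,2) G(1,2))
    finally show ?thesis unfolding H_def by (simp add: algebra_simps)
  qed
  moreover have "H \<in> borel_measurable lborel" unfolding H_def using F(1) G(1) by measurable
  ultimately show ?thesis
    using spectrum_lincomb_square_integrable[OF F(1,2) G(1,2)] unfolding H_def by auto
qed

lemma BL_lincomb:
  assumes u: "u \<in> BL dm" and v: "v \<in> BL dm"
  shows "(\<lambda>t. a * u t + b * v t) \<in> BL dm"
proof -
  have "(\<lambda>t. a * u t + b * v t) \<in> L2 (dset dm)"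
    using u v semi_inner_space.V_lincomb[OF L2_semi_inner_space[OF dset_sets]] unfolding BL_def by auto
  moreover have "bandlimited dm (\<lambda>t. a * u t + b * v t)"
    using u v bandlimited_Interval_lincomb bandlimited_RealLine_lincomb unfolding BL_def
    by (cases dm) auto
  ultimately show ?thesis unfolding BL_def by auto
qed

section \<open>Bandlimited signals on a finite interval\<close>

definition trig_basis :: "nat \<Rightarrow> nat \<times> bool \<Rightarrow> real \<Rightarrow> real" where
  "trig_basis T i = (\<lambda>t. if snd i then sin (2 * pi * real (fst i) * t / real T) else cos (2 * pi * real (fst i) * t / real T))"

definition trig_index :: "nat \<Rightarrow> (nat \<times> bool) set" where
  "trig_index T = ((\<lambda>k. (k, False)) ` {0..(T - 1) div 2}) \<union> ((\<lambda>k. (k, True)) ` {1..(T - 1) div 2})"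

lemma trig_index_finite: "finite (trig_index T)" unfolding trig_index_def by auto

lemma trig_basis_continuous: "continuous_on A (trig_basis T i)"
  unfolding trig_basis_def divide_inverse by (cases "snd i") (auto intro!: continuous_intros)

lemma trig_basis_L2: "trig_basis T i \<in> L2 {0..real T}"
proof -
  have "trig_basis T i \<in> borel_measurable lborel"
    using trig_basis_continuous[of UNIV T i] by (simp add: borel_measurable_continuous_onI)
  moreover have "set_integrable lborel {0..real T} (\<lambda>t. (trig_basis T i t)^2)"
    by (rule borel_integrable_atLeastAtMost') (intro continuous_intros trig_basis_continuous)
  ultimately show ?thesis unfolding L2_def by auto
qed

lemma sum_trig_index:
  "(\<Sum>i\<in>trig_index T. c i * trig_basis T i t) =
    c (0, False) + (\<Sum>k=1..(T - 1) div 2. c (k, False) * cos (2 * pi * real k * t / real T) + c (k, True) * sin (2 * pi * real k * t / real T))"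
proof -
  let ?M = "(T - 1) div 2"
  have disj: "((\<lambda>k. (k, False)) ` {0..?M}) \<inter> ((\<lambda>k. (k, True)) ` {1..?M}) = {}" by auto
  have "(\<Sum>i\<in>trig_index T. c i * trig_basis T i t) = (\<Sum>i\<in>(\<lambda>k. (k, False)) ` {0..?M}. c i * trig_basis T i t) + (\<Sum>i\<in>(\<lambda>k. (k, True)) ` {1..?M}. c i * trig_basis T i t)"
    unfolding trig_index_def by (rule sum.union_disjoint) (use disj in auto)
  also have "(\<Sum>i\<in>(\<lambda>k. (k, False)) ` {0..?M}. c i * trig_basis T i t) = (\<Sum>k=0..?M. c (k, False) * cos (2 * pi * real k * t / real T))"
    by (subst sum.reindex) (auto simp: inj_on_def trig_basis_def)
  also have "\<dots> = c (0, False) + (\<Sum>k=1..?M. c (k, False) * cos (2 * pi * real k * t / real T))"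
    by (subst sum.atLeast_Suc_atMost) auto
  also have "(\<Sum>i\<in>(\<lambda>k. (k, True)) ` {1..?M}. c i * trig_basis T i t) = (\<Sum>k=1..?M. c (k, True) * sin (2 * pi * real k * t / real T))"
    by (subst sum.reindex) (auto simp: inj_on_def trig_basis_def)
  finally show ?thesis by (simp add: sum.distrib)
qed

lemma trig_span_subset_BL: "lin_span (trig_index T) (trig_basis T) \<subseteq> BL (Interval T)"
proof
  fix v assume v: "v \<in> lin_span (trig_index T) (trig_basis T)"
  interpret S: semi_inner_space "L2 {0..real T}" "ip {0..real T}" by (rule L2_semi_inner_space) simp
  have "v \<in> L2 {0..real T}" using S.lin_span_subset[of "trig_index T" "trig_basis T", OF trig_index_finite] trig_basis_L2 v by auto
  moreover obtain c where c: "v = (\<lambda>t. \<Sum>i\<in>trig_index T. c i * trig_basis T i t)" using v unfolding lin_span_def by auto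
  have "bandlimited (Interval T) v"
    unfolding bandlimited.simps c sum_trig_index
    by (rule exI[of _ "\<lambda>k. c (k, False)"], rule exI[of _ "\<lambda>k. c (k, True)"]) simp
  ultimately show "v \<in> BL (Interval T)" unfolding BL_def by simp
qed

lemma BL_Interval_null_equiv_trig_span:
  assumes v: "v \<in> BL (Interval T)"
  shows "\<exists>w\<in>lin_span (trig_index T) (trig_basis T). ip {0..real T} (\<lambda>t. v t - w t) (\<lambda>t. v t - w t) = 0"
proof -
  obtain a b where ab: "\<forall>t\<in>{0..real T}. v t = a 0 + (\<Sum>k=1..(T - 1) div 2.
                a k * cos (2 * pi * real k * t / real T) + b k * sin (2 * pi * real k * t / real T))"
    using v unfolding BL_def by auto
  define c where "c i = (if snd i then b (fst i) else a (fst i))" for i :: "nat \<times> bool"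
  define w where "w = (\<lambda>t. \<Sum>i\<in>trig_index T. c i * trig_basis T i t)"
  have wl: "w \<in> lin_span (trig_index T) (trig_basis T)" unfolding w_def lin_span_def by (intro CollectI exI[of _ c]) (rule refl)
  have eq: "t \<in> {0..real T} \<Longrightarrow> v t = w t" for t unfolding w_def sum_trig_index c_def using ab by simp
  have "ip {0..real T} (\<lambda>t. v t - w t) (\<lambda>t. v t - w t) = (LINT t:{0..real T}|lborel. 0)"
    unfolding ip_def set_lebesgue_integral_def by (intro Bochner_Integration.integral_cong refl) (auto simp: eq indicator_def)
  then show ?thesis using wl by (intro bexI[of _ w]) auto
qed

lemma exists_BL_projection_Interval:
  assumes u: "u \<in> L2 {0..real T}"
  shows "\<exists>p\<in>BL (Interval T). \<forall>v\<in>BL (Interval T). ip {0..real T} (\<lambda>t. u t - p t) v = 0"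
proof -
  interpret S: semi_inner_space "L2 {0..real T}" "ip {0..real T}" by (rule L2_semi_inner_space) simp
  obtain p where p: "p \<in> lin_span (trig_index T) (trig_basis T)" "\<forall>w\<in>lin_span (trig_index T) (trig_basis T). ip {0..real T} (\<lambda>t. u t - p t) w = 0"
    using S.exists_orthogonal_projection_onto_span[of "trig_index T" "trig_basis T" u, OF trig_index_finite _ u] trig_basis_L2 by auto
  have linV: "lin_span (trig_index T) (trig_basis T) \<subseteq> L2 {0..real T}" using S.lin_span_subset[of "trig_index T" "trig_basis T", OF trig_index_finite] trig_basis_L2 by auto
  have pV: "p \<in> L2 {0..real T}" using p linV by auto
  have upV: "(\<lambda>t. u t - p t) \<in> L2 {0..real T}" using S.V_diff[OF u pV] .
  show ?thesis
  proof (intro bexI[of _ p] ballI)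
    show "p \<in> BL (Interval T)" using p trig_span_subset_BL by auto
    fix v assume v: "v \<in> BL (Interval T)"
    have vV: "v \<in> L2 {0..real T}" using v unfolding BL_def by simp
    obtain w where w: "w \<in> lin_span (trig_index T) (trig_basis T)" "ip {0..real T} (\<lambda>t. v t - w t) (\<lambda>t. v t - w t) = 0"
      using BL_Interval_null_equiv_trig_span[OF v] by auto
    have wV: "w \<in> L2 {0..real T}" using w linV by auto
    have "S.null_equiv v w" unfolding S.null_equiv_def using w by simp
    then have "ip {0..real T} (\<lambda>t. u t - p t) v = ip {0..real T} (\<lambda>t. u t - p t) w"
      by (rule S.null_equiv_f_right[OF _ vV wV upV])
    then show "ip {0..real T} (\<lambda>t. u t - p t) v = 0" using p(2) w(1) by simp
  qed
qed


section \<open>The sinc kernel and Paley--Wiener functions\<close>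

definition nsinc :: "real \<Rightarrow> real" where "nsinc x = sinc (pi * x)"

lemma isCont_nsinc: "isCont nsinc x"
  unfolding nsinc_def by (intro continuous_intros isCont_o2[OF _ isCont_sinc]) 

lemma continuous_on_nsinc: "continuous_on A nsinc"
  using isCont_nsinc by (simp add: continuous_at_imp_continuous_on)

lemma nsinc_measurable[measurable]: "nsinc \<in> borel_measurable borel"
  using continuous_on_nsinc[of UNIV] by (rule borel_measurable_continuous_onI)

lemma nsinc_minus: "nsinc (- x) = nsinc x" unfolding nsinc_def by simp

lemma abs_nsinc_le_1: "\<bar>nsinc x\<bar> \<le> 1"
proof (cases "x = 0")
  case True then show ?thesis by (simp add: nsinc_def)
next
  case False
  then have "pi * x \<noteq> 0" by simp
  moreover have "\<bar>sin (pi * x)\<bar> \<le> \<bar>pi * x\<bar>" by (rule abs_sin_x_le_abs_x)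
  ultimately show ?thesis unfolding nsinc_def by (simp add: abs_divide divide_le_eq_1)
qed

lemma abs_nsinc_le_inverse: "x \<noteq> 0 \<Longrightarrow> \<bar>nsinc x\<bar> \<le> 1 / (pi * \<bar>x\<bar>)"
proof -
  assume x: "x \<noteq> 0"
  have "\<bar>nsinc x\<bar> = \<bar>sin (pi * x)\<bar> / (pi * \<bar>x\<bar>)" unfolding nsinc_def using x by (simp add: abs_divide abs_mult)
  also have "\<dots> \<le> 1 / (pi * \<bar>x\<bar>)" using x by (intro divide_right_mono) auto
  finally show ?thesis .
qed

lemma nsinc_square_bound: "(nsinc x)^2 \<le> 2 * inverse (1 + x^2)"
proof (cases "\<bar>x\<bar> \<le> 1")
  case True
  have "(nsinc x)^2 \<le> 1" using abs_nsinc_le_1[of x] abs_square_le_1 by blast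
  moreover have "x^2 \<le> 1" using True abs_square_le_1 by blast
  then have "1 \<le> 2 * inverse (1 + x^2)"
    by (simp add: divide_simps add_pos_nonneg)
  ultimately show ?thesis by linarith
next
  case False
  then have x0: "x \<noteq> 0" and x1: "1 < \<bar>x\<bar>" by auto
  have "\<bar>nsinc x\<bar> \<le> 1 / (pi * \<bar>x\<bar>)" using abs_nsinc_le_inverse[OF x0] .
  also have "\<dots> \<le> 1 / \<bar>x\<bar>" using x0 pi_ge_two by (intro divide_left_mono) (auto intro: order_trans[of _ "1 * \<bar>x\<bar>"])
  finally have "\<bar>nsinc x\<bar> \<le> 1 / \<bar>x\<bar>" .
  then have "\<bar>nsinc x\<bar>^2 \<le> (1 / \<bar>x\<bar>)^2" by (rule power_mono) simp
  then have "(nsinc x)^2 \<le> (1 / \<bar>x\<bar>)^2" by simp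
  also have "\<dots> = 1 / x^2" by (simp add: power_divide)
  also have "\<dots> \<le> 2 * inverse (1 + x^2)"
  proof -
    have "1 \<le> x^2" using x1 abs_square_less_1[of x] by linarith
    then have "1 + x^2 \<le> 2 * x^2" by linarith
    then show ?thesis using x0 by (simp add: field_simps)
  qed
  finally show ?thesis .
qed

lemma integrable_inverse_1_plus_square_lborel: "integrable lborel (\<lambda>x. inverse (1 + x^2) :: real)"
proof -
  have "set_integrable lborel (einterval (-\<infinity>) \<infinity>) (\<lambda>x. inverse (1 + x^2) :: real)"
    by (rule integrable_inverse_1_plus_square)
  moreover have "einterval (-\<infinity>) \<infinity> = UNIV" by (auto simp: einterval_def)
  ultimately show ?thesis by (simp add: set_integrable_def)
qed

lemma nsinc_square_integrable: "integrable lborel (\<lambda>x. (nsinc x)^2)"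
proof (rule Bochner_Integration.integrable_bound[of _ "\<lambda>x. 2 * inverse (1 + x^2)"])
  show "integrable lborel (\<lambda>x. 2 * inverse (1 + x^2) :: real)" by (intro integrable_mult_right integrable_inverse_1_plus_square_lborel)
  show "(\<lambda>x. (nsinc x)^2) \<in> borel_measurable lborel" by measurable
  show "AE x in lborel. norm ((nsinc x)^2) \<le> norm (2 * inverse (1 + x^2) :: real)"
    using nsinc_square_bound by (auto simp: abs_le_iff)
qed

lemma Si_minus: "Si (- x) = - Si x"
proof (cases "x \<ge> 0")
  case True then show ?thesis by (rule Si_neg)
next
  case False then show ?thesis using Si_neg[of "-x"] by simp
qed

lemma sinc_mult_scale: "x \<noteq> 0 \<Longrightarrow> sinc (c * x) * c = sin (c * x) / x"
  by (cases "c = 0") auto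

lemma sin_add_sin_diff_mult: "sin ((pi + w) * x) + sin ((pi - w) * x) = 2 * sin (pi * x) * cos (w * x)"
  by (simp add: distrib_right left_diff_distrib sin_add sin_diff)

lemma nsinc_cos_antiderivative:
  "((\<lambda>x. (Si ((pi + w) * x) + Si ((pi - w) * x)) / (2 * pi)) has_real_derivative nsinc x * cos (w * x)) (at x)"
proof -
  have d: "((\<lambda>x. (Si ((pi + w) * x) + Si ((pi - w) * x)) / (2 * pi)) has_real_derivative
      (sinc ((pi + w) * x) * (pi + w) + sinc ((pi - w) * x) * (pi - w)) / (2 * pi)) (at x)"
    by (intro DERIV_cdivide DERIV_add DERIV_chain2[OF DERIV_Si] derivative_eq_intros) auto
  have "(sinc ((pi + w) * x) * (pi + w) + sinc ((pi - w) * x) * (pi - w)) / (2 * pi) = nsinc x * cos (w * x)"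
  proof (cases "x = 0")
    case True then show ?thesis by (simp add: nsinc_def)
  next
    case False
    have "(sinc ((pi + w) * x) * (pi + w) + sinc ((pi - w) * x) * (pi - w)) / (2 * pi) =
        (sin ((pi + w) * x) + sin ((pi - w) * x)) / x / (2 * pi)"
      using sinc_mult_scale[OF False, of "pi + w"] sinc_mult_scale[OF False, of "pi - w"] by (simp add: add_divide_distrib)
    also have "\<dots> = nsinc x * cos (w * x)" unfolding sin_add_sin_diff_mult nsinc_def using False by simp
    finally show ?thesis .
  qed
  with d show ?thesis by simp
qed

definition dirichlet :: "real \<Rightarrow> real \<Rightarrow> real" where
  "dirichlet w R = (Si ((pi + w) * R) + Si ((pi - w) * R)) / pi"

lemma nsinc_cos_integral:
  assumes R: "R \<ge> 0"
  shows "(LINT x|lborel. indicator {-R..R} x * (nsinc x * cos (w * x))) = dirichlet w R"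
proof -
  let ?P = "\<lambda>x. (Si ((pi + w) * x) + Si ((pi - w) * x)) / (2 * pi)"
  have cont: "continuous_on {-R..R} (\<lambda>x. nsinc x * cos (w * x))" by (intro continuous_intros continuous_on_nsinc)
  have si: "set_integrable lborel {-R..R} (\<lambda>x. nsinc x * cos (w * x))" by (rule borel_integrable_atLeastAtMost'[OF cont])
  have "((\<lambda>x. nsinc x * cos (w * x)) has_integral (?P R - ?P (-R))) {-R..R}"
    by (rule fundamental_theorem_of_calculus) (use R in \<open>auto intro!: DERIV_subset[OF nsinc_cos_antiderivative] simp: has_real_derivative_iff_has_vector_derivative[symmetric]\<close>)
  then have "integral {-R..R} (\<lambda>x. nsinc x * cos (w * x)) = ?P R - ?P (-R)" by (rule integral_unique)
  also have "?P R - ?P (-R) = dirichlet w R"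
    using Si_minus[of "(pi + w) * R"] Si_minus[of "(pi - w) * R"] by (simp add: dirichlet_def field_simps)
  finally have "integral {-R..R} (\<lambda>x. nsinc x * cos (w * x)) = dirichlet w R" .
  moreover have "set_lebesgue_integral lborel {-R..R} (\<lambda>x. nsinc x * cos (w * x)) = integral {-R..R} (\<lambda>x. nsinc x * cos (w * x))"
    by (rule set_borel_integral_eq_integral(2)[OF si])
  ultimately show ?thesis by (simp add: set_lebesgue_integral_def)
qed

lemma lborel_integral_odd_eq_0:
  fixes f :: "real \<Rightarrow> real"
  assumes "\<And>x. f (- x) = - f x"
  shows "(LINT x|lborel. f x) = 0"
proof -
  have "(LINT x|lborel. f x) = \<bar>-1\<bar> *\<^sub>R (LINT x|lborel. f (0 + -1 * x))"
    by (rule lborel_integral_real_affine) simp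
  also have "\<dots> = - (LINT x|lborel. f x)" using assms by simp
  finally show ?thesis by simp
qed

lemma nsinc_sin_integral: "(LINT x|lborel. indicator {-R..R} x * (nsinc x * sin (w * x))) = 0"
  by (rule lborel_integral_odd_eq_0) (auto simp: nsinc_minus indicator_def)

lemma dirichlet_limit:
  assumes w: "\<bar>w\<bar> < pi"
  shows "(\<lambda>k. dirichlet w (real k)) \<longlonglongrightarrow> 1"
proof -
  have l: "(\<lambda>k. Si (c * real k)) \<longlonglongrightarrow> pi / 2" if c: "c > 0" for c
  proof -
    have "filterlim (\<lambda>k. c * real k) at_top sequentially"
      by (intro filterlim_tendsto_pos_mult_at_top[OF tendsto_const c] filterlim_real_sequentially)
    then show ?thesis by (rule filterlim_compose[OF Si_at_top])
  qed
  have "(\<lambda>k. dirichlet w (real k)) \<longlonglongrightarrow> (pi / 2 + pi / 2) / pi"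
    unfolding dirichlet_def
    using w by (intro tendsto_divide tendsto_add l) auto
  then show ?thesis by simp
qed

lemma dirichlet_bounded: "\<exists>C. \<forall>w R. \<bar>dirichlet w R\<bar> \<le> C"
proof -
  obtain B where B: "\<forall>T. \<bar>Si T\<bar> \<le> B" using bounded_Si by blast
  have "\<bar>dirichlet w R\<bar> \<le> 2 * B / pi" for w R
  proof -
    have "\<bar>Si ((pi + w) * R) + Si ((pi - w) * R)\<bar> \<le> 2 * B" using B[rule_format, of "(pi + w) * R"] B[rule_format, of "(pi - w) * R"] by linarith
    then show ?thesis by (simp add: dirichlet_def abs_divide divide_right_mono)
  qed
  then show ?thesis by blast
qed


lemma exp_i_times_real: "exp (\<i> * complex_of_real y) = complex_of_real (cos y) + \<i> * complex_of_real (sin y)"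
  by (simp add: complex_eq_iff Re_exp Im_exp)

lemma indicator_trig_integrable:
  fixes g :: "real \<Rightarrow> real"
  assumes "\<And>y. \<bar>g y\<bar> \<le> 1" "continuous_on UNIV g"
  shows "integrable lborel (\<lambda>w. indicator {-pi..pi} w * g (w * x))"
proof (rule Bochner_Integration.integrable_bound[OF integrable_real_indicator[of "{-pi..pi}"]])
  show "{-pi..pi} \<in> sets lborel" by simp
  show "emeasure lborel {-pi..pi} < \<infinity>" by (simp add: emeasure_lborel_Icc_eq)
  have "g \<in> borel_measurable borel" using assms(2) by (rule borel_measurable_continuous_onI)
  then show "(\<lambda>w. indicator {-pi..pi} w * g (w * x)) \<in> borel_measurable lborel" by measurable
  show "AE w in lborel. norm (indicator {-pi..pi} w * g (w * x)) \<le> norm (indicator {-pi..pi} w :: real)"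
    using assms(1) by (auto simp: indicator_def)
qed

lemma cos_integral_pi: "(LINT w|lborel. indicator {-pi..pi} w * cos (w * x)) = 2 * pi * nsinc x"
proof -
  have cont: "continuous_on {-pi..pi} (\<lambda>w. cos (w * x))" by (intro continuous_intros)
  have si: "set_integrable lborel {-pi..pi} (\<lambda>w. cos (w * x))" by (rule borel_integrable_atLeastAtMost'[OF cont])
  have "integral {-pi..pi} (\<lambda>w. cos (w * x)) = 2 * pi * nsinc x"
  proof (cases "x = 0")
    case True
    then show ?thesis by (simp add: nsinc_def)
  next
    case False
    have "((\<lambda>w. cos (w * x)) has_integral (sin (pi * x) / x - sin (-pi * x) / x)) {-pi..pi}"
    proof (rule fundamental_theorem_of_calculus[where f = "\<lambda>w. sin (w * x) / x"])
      show "- pi \<le> pi" by simp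
      fix w assume "w \<in> {-pi..pi}"
      have "((\<lambda>w. sin (w * x) / x) has_real_derivative cos (w * x)) (at w)"
        using False by (auto intro!: derivative_eq_intros)
      then show "((\<lambda>w. sin (w * x) / x) has_vector_derivative cos (w * x)) (at w within {-pi..pi})"
        by (simp add: has_real_derivative_iff_has_vector_derivative[symmetric] has_field_derivative_at_within)
    qed
    then have "integral {-pi..pi} (\<lambda>w. cos (w * x)) = sin (pi * x) / x - sin (-pi * x) / x" by (rule integral_unique)
    also have "\<dots> = 2 * pi * nsinc x" using False by (simp add: nsinc_def field_simps)
    finally show ?thesis .
  qed
  moreover have "set_lebesgue_integral lborel {-pi..pi} (\<lambda>w. cos (w * x)) = integral {-pi..pi} (\<lambda>w. cos (w * x))"
    by (rule set_borel_integral_eq_integral(2)[OF si])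
  ultimately show ?thesis by (simp add: set_lebesgue_integral_def)
qed

lemma sin_integral_pi: "(LINT w|lborel. indicator {-pi..pi} w * sin (w * x)) = 0"
  by (rule lborel_integral_odd_eq_0) (auto simp: indicator_def)

lemma nsinc_fourier: "(CLINT w|lborel. complex_of_real (indicator {-pi..pi} w) * exp (\<i> * complex_of_real (w * x))) = complex_of_real (2 * pi * nsinc x)"
proof -
  have ci: "integrable lborel (\<lambda>w. complex_of_real (indicator {-pi..pi} w * cos (w * x)))"
    by (rule integrable_of_real[OF indicator_trig_integrable]) (auto intro: continuous_intros)
  have si: "integrable lborel (\<lambda>w. \<i> * complex_of_real (indicator {-pi..pi} w * sin (w * x)))"
    by (rule integrable_mult_right, rule integrable_of_real[OF indicator_trig_integrable]) (auto intro: continuous_intros)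
  have "(CLINT w|lborel. complex_of_real (indicator {-pi..pi} w) * exp (\<i> * complex_of_real (w * x)))
      = (CLINT w|lborel. complex_of_real (indicator {-pi..pi} w * cos (w * x)) + \<i> * complex_of_real (indicator {-pi..pi} w * sin (w * x)))"
    by (intro Bochner_Integration.integral_cong refl) (simp only: exp_i_times_real, simp add: algebra_simps)
  also have "\<dots> = (CLINT w|lborel. complex_of_real (indicator {-pi..pi} w * cos (w * x))) + (CLINT w|lborel. \<i> * complex_of_real (indicator {-pi..pi} w * sin (w * x)))"
    by (rule Bochner_Integration.integral_add[OF ci si])
  also have "\<dots> = complex_of_real (LINT w|lborel. indicator {-pi..pi} w * cos (w * x)) + \<i> * complex_of_real (LINT w|lborel. indicator {-pi..pi} w * sin (w * x))"
    by (simp only: integral_mult_right_zero integral_complex_of_real)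
  finally show ?thesis unfolding cos_integral_pi sin_integral_pi by simp
qed

lemma truncated_nsinc_trig_integrable:
  fixes g :: "real \<Rightarrow> real"
  assumes g: "\<And>y. \<bar>g y\<bar> \<le> 1" "continuous_on UNIV g"
  shows "integrable lborel (\<lambda>x. indicator {-R..R} x * (nsinc x * g (w * x)))"
proof (rule Bochner_Integration.integrable_bound[OF integrable_real_indicator[of "{-R..R}"]])
  show "{-R..R} \<in> sets lborel" by simp
  show "emeasure lborel {-R..R} < \<infinity>" by (simp add: emeasure_lborel_Icc_eq)
  have "g \<in> borel_measurable borel" using g(2) by (rule borel_measurable_continuous_onI)
  then show "(\<lambda>x. indicator {-R..R} x * (nsinc x * g (w * x))) \<in> borel_measurable lborel" by measurable
  have "\<bar>nsinc x * g (w * x)\<bar> \<le> 1" for x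
    using abs_nsinc_le_1[of x] g(1)[of "w * x"] by (simp add: abs_mult mult_le_one)
  then show "AE x in lborel. norm (indicator {-R..R} x * (nsinc x * g (w * x))) \<le> norm (indicator {-R..R} x :: real)"
    by (auto simp: indicator_def)
qed

lemma truncated_nsinc_fourier_centered:
  assumes R: "R \<ge> 0"
  shows "(CLINT x|lborel. complex_of_real (indicator {-R..R} x * nsinc x) * exp (\<i> * complex_of_real (w * x)))
     = complex_of_real (dirichlet w R)"
proof -
  let ?c = "\<lambda>x. indicator {-R..R} x * (nsinc x * cos (w * x))"
  let ?s = "\<lambda>x. indicator {-R..R} x * (nsinc x * sin (w * x))"
  have c: "integrable lborel ?c" and s: "integrable lborel ?s"
    by (auto intro!: truncated_nsinc_trig_integrable continuous_intros)
  have "(CLINT x|lborel. complex_of_real (indicator {-R..R} x * nsinc x) * exp (\<i> * complex_of_real (w * x)))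
      = (CLINT x|lborel. complex_of_real (?c x) + \<i> * complex_of_real (?s x))"
    by (intro Bochner_Integration.integral_cong refl) (simp only: exp_i_times_real, simp add: algebra_simps)
  also have "\<dots> = (CLINT x|lborel. complex_of_real (?c x)) + (CLINT x|lborel. \<i> * complex_of_real (?s x))"
    by (intro Bochner_Integration.integral_add integrable_of_real integrable_mult_right c s)
  also have "\<dots> = complex_of_real (LINT x|lborel. ?c x) + \<i> * complex_of_real (LINT x|lborel. ?s x)"
    by (simp only: integral_mult_right_zero integral_complex_of_real)
  finally show ?thesis unfolding nsinc_cos_integral[OF R] nsinc_sin_integral by simp
qed

lemma truncated_nsinc_fourier:
  assumes R: "R \<ge> 0"
  shows "(CLINT t|lborel. complex_of_real (indicator {s - R..s + R} t * nsinc (t - s)) * exp (\<i> * complex_of_real (w * t)))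
     = exp (\<i> * complex_of_real (w * s)) * complex_of_real (dirichlet w R)"
proof -
  let ?f = "\<lambda>t. complex_of_real (indicator {s - R..s + R} t * nsinc (t - s)) * exp (\<i> * complex_of_real (w * t))"
  have shift: "?f (s + 1 * x) = exp (\<i> * complex_of_real (w * s)) *
      (complex_of_real (indicator {-R..R} x * nsinc x) * exp (\<i> * complex_of_real (w * x)))" for x
  proof -
    have "exp (\<i> * complex_of_real (w * (s + 1 * x))) =
        exp (\<i> * complex_of_real (w * s)) * exp (\<i> * complex_of_real (w * x))"
      by (simp add: distrib_left exp_add[symmetric])
    moreover have "indicator {s - R..s + R} (s + 1 * x) = (indicator {-R..R} x :: real)"
      by (auto simp: indicator_def)
    ultimately show ?thesis by simp
  qed
  have "(CLINT t|lborel. ?f t) = \<bar>1\<bar> *\<^sub>R (CLINT x|lborel. ?f (s + 1 * x))"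
    by (rule lborel_integral_real_affine) simp
  also have "\<dots> = exp (\<i> * complex_of_real (w * s)) *
      (CLINT x|lborel. complex_of_real (indicator {-R..R} x * nsinc x) * exp (\<i> * complex_of_real (w * x)))"
    unfolding shift by simp
  finally show ?thesis unfolding truncated_nsinc_fourier_centered[OF R] .
qed

lemma integrable_lborel_pair_product_bound:
  fixes \<Phi> :: "real \<times> real \<Rightarrow> 'b::{banach, second_countable_topology}"
  assumes m: "\<Phi> \<in> borel_measurable (lborel \<Otimes>\<^sub>M lborel)"
    and g1: "integrable lborel g1" and g2: "integrable lborel g2"
    and b: "\<And>x y. norm (\<Phi> (x, y)) \<le> g1 x * g2 y"
  shows "integrable (lborel \<Otimes>\<^sub>M lborel) \<Phi>"
proof (rule Bochner_Integration.integrable_bound[of _ "\<lambda>(x,y). g1 x * g2 y"])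
  have m1[measurable]: "g1 \<in> borel_measurable lborel" and m2[measurable]: "g2 \<in> borel_measurable lborel"
    using g1 g2 by auto
  show "integrable (lborel \<Otimes>\<^sub>M lborel) (\<lambda>(x,y). g1 x * g2 y)"
  proof (rule lborel_pair.Fubini_integrable)
    show "(\<lambda>(x,y). g1 x * g2 y) \<in> borel_measurable (lborel \<Otimes>\<^sub>M lborel)" by measurable
    have "(\<lambda>x. LINT y|lborel. norm (case (x, y) of (x, y) \<Rightarrow> g1 x * g2 y)) = (\<lambda>x. \<bar>g1 x\<bar> * (LINT y|lborel. \<bar>g2 y\<bar>))"
      by (simp add: abs_mult)
    moreover have "integrable lborel (\<lambda>x. \<bar>g1 x\<bar> * (LINT y|lborel. \<bar>g2 y\<bar>))"
      by (intro integrable_mult_left integrable_abs g1)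
    ultimately show "integrable lborel (\<lambda>x. LINT y|lborel. norm (case (x, y) of (x, y) \<Rightarrow> g1 x * g2 y))" by simp
    show "AE x in lborel. integrable lborel (\<lambda>y. case (x, y) of (x, y) \<Rightarrow> g1 x * g2 y)"
      using g2 by simp
  qed
  show "\<Phi> \<in> borel_measurable (lborel \<Otimes>\<^sub>M lborel)" by (rule m)
  show "AE p in lborel \<Otimes>\<^sub>M lborel. norm (\<Phi> p) \<le> norm (case p of (x, y) \<Rightarrow> g1 x * g2 y)"
    using b by (auto split: prod.splits intro: order_trans[OF _ abs_ge_self])
qed

locale paley_wiener =
  fixes v :: "real \<Rightarrow> real" and G :: "real \<Rightarrow> complex"
  assumes G_measurable[measurable]: "G \<in> borel_measurable lborel"
    and G_square_integrable: "set_integrable lborel {-pi..pi} (\<lambda>w. (cmod (G w))^2)"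
    and v_fourier: "\<And>t. complex_of_real (v t) = set_lebesgue_integral lborel {-pi..pi} (\<lambda>w. G w * exp (\<i> * complex_of_real (w * t)))"
    and v_L2: "v \<in> L2 UNIV"
begin

lemma spectrum_indicator_integrable: "integrable lborel (\<lambda>w. indicator {-pi..pi} w *\<^sub>R G w)"
  using spectrum_integrable[OF G_measurable G_square_integrable, of 0] by (simp add: set_integrable_def)

lemma spectrum_norm_integrable: "integrable lborel (\<lambda>w. indicator {-pi..pi} w * cmod (G w))"
  using integrable_norm[OF spectrum_indicator_integrable] by (simp add: norm_mult)

lemma v_measurable[measurable]: "v \<in> borel_measurable lborel" using v_L2 by (simp add: L2_def)

lemma v_square_integrable: "integrable lborel (\<lambda>t. (v t)^2)" using v_L2 by (simp add: L2_def set_integrable_def)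

lemma nsinc_shift_mult_integrable: "integrable lborel (\<lambda>t. nsinc (t - s) * v t)"
proof (rule Bochner_Integration.integrable_bound[of _ "\<lambda>t. (nsinc (t - s))^2 + (v t)^2"])
  have "integrable lborel (\<lambda>x. (nsinc (- s + 1 * x))^2)"
    by (rule lborel_integrable_real_affine[OF nsinc_square_integrable]) simp
  then have "integrable lborel (\<lambda>t. (nsinc (t - s))^2)" by simp
  then show "integrable lborel (\<lambda>t. (nsinc (t - s))^2 + (v t)^2)" by (intro Bochner_Integration.integrable_add v_square_integrable)
  show "(\<lambda>t. nsinc (t - s) * v t) \<in> borel_measurable lborel" by measurable
  show "AE t in lborel. norm (nsinc (t - s) * v t) \<le> norm ((nsinc (t - s))^2 + (v t)^2)"
    using abs_mult_le_sum_squares by auto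
qed

lemma nsinc_shift_mult_L1_bound:
  "(LINT t|lborel. \<bar>nsinc (t - s) * v t\<bar>) \<le> (LINT x|lborel. (nsinc x)^2) + (LINT t|lborel. (v t)^2)"
proof -
  have shifted: "integrable lborel (\<lambda>t. (nsinc (t - s))^2)"
    "(LINT t|lborel. (nsinc (t - s))^2) = (LINT x|lborel. (nsinc x)^2)"
    using lborel_integrable_real_affine[OF nsinc_square_integrable, of 1 "- s"]
      lborel_integral_real_affine[of 1 "\<lambda>x. (nsinc x)^2" "- s"] by simp_all
  have "(LINT t|lborel. \<bar>nsinc (t - s) * v t\<bar>) \<le> (LINT t|lborel. (nsinc (t - s))^2 + (v t)^2)"
    by (intro integral_mono integrable_abs nsinc_shift_mult_integrable Bochner_Integration.integrable_add
        shifted v_square_integrable abs_mult_le_sum_squares)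
  also have "\<dots> = (LINT x|lborel. (nsinc x)^2) + (LINT t|lborel. (v t)^2)"
    by (simp add: Bochner_Integration.integral_add shifted v_square_integrable)
  finally show ?thesis .
qed

lemma truncated_nsinc_pairing:
  assumes R: "R \<ge> 0"
  shows "complex_of_real (LINT t|lborel. indicator {s - R..s + R} t * (nsinc (t - s) * v t))
    = (CLINT w|lborel. indicator {-pi..pi} w *\<^sub>R (G w * (exp (\<i> * complex_of_real (w * s)) * complex_of_real (dirichlet w R))))"
proof -
  define a where "a t = indicator {s - R..s + R} t * nsinc (t - s)" for t
  define \<Phi> where "\<Phi> t w = complex_of_real (a t) * (indicator {-pi..pi} w *\<^sub>R (G w * exp (\<i> * complex_of_real (w * t))))" for t w
  have am[measurable]: "a \<in> borel_measurable lborel" unfolding a_def by measurable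
  have "complex_of_real (LINT t|lborel. indicator {s - R..s + R} t * (nsinc (t - s) * v t)) = complex_of_real (LINT t|lborel. a t * v t)"
    unfolding a_def by (simp only: mult.assoc)
  also have "\<dots> = (CLINT t|lborel. complex_of_real (a t * v t))" by (rule integral_complex_of_real[symmetric])
  also have "\<dots> = (CLINT t|lborel. complex_of_real (a t) * complex_of_real (v t))" by (simp only: of_real_mult)
  also have "\<dots> = (CLINT t|lborel. CLINT w|lborel. \<Phi> t w)"
  proof (intro Bochner_Integration.integral_cong refl)
    fix t
    show "complex_of_real (a t) * complex_of_real (v t) = (CLINT w|lborel. \<Phi> t w)"
      unfolding \<Phi>_def v_fourier[of t] set_lebesgue_integral_def by (rule integral_mult_right_zero[symmetric])
  qed
  also have "\<dots> = (CLINT w|lborel. CLINT t|lborel. \<Phi> t w)"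
  proof (rule lborel_pair.Fubini_integral[symmetric])
    show "integrable (lborel \<Otimes>\<^sub>M lborel) (case_prod \<Phi>)"
    proof (rule integrable_lborel_pair_product_bound[of _ "indicator {s - R..s + R}" "\<lambda>w. indicator {-pi..pi} w * cmod (G w)"])
      show "case_prod \<Phi> \<in> borel_measurable (lborel \<Otimes>\<^sub>M lborel)" unfolding \<Phi>_def by measurable
      show "integrable lborel (indicator {s - R..s + R} :: real \<Rightarrow> real)"
        by (rule integrable_real_indicator) (auto simp: emeasure_lborel_Icc_eq)
      show "integrable lborel (\<lambda>w. indicator {-pi..pi} w * cmod (G w))" by (rule spectrum_norm_integrable)
      fix t w
      have "\<bar>a t\<bar> \<le> indicator {s - R..s + R} t" unfolding a_def using abs_nsinc_le_1[of "t - s"] by (auto simp: indicator_def)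
      then show "norm (case_prod \<Phi> (t, w)) \<le> indicator {s - R..s + R} t * (indicator {-pi..pi} w * cmod (G w))"
        unfolding \<Phi>_def by (auto simp: norm_mult norm_exp_i_times indicator_def intro: mult_left_le_one_le)
    qed
  qed
  also have "\<dots> = (CLINT w|lborel. indicator {-pi..pi} w *\<^sub>R (G w * (exp (\<i> * complex_of_real (w * s)) * complex_of_real (dirichlet w R))))"
  proof (intro Bochner_Integration.integral_cong refl)
    fix w
    have "(CLINT t|lborel. \<Phi> t w) = (CLINT t|lborel. (indicator {-pi..pi} w *\<^sub>R G w) * (complex_of_real (a t) * exp (\<i> * complex_of_real (w * t))))"
      unfolding \<Phi>_def by (intro Bochner_Integration.integral_cong refl) (auto simp: indicator_def)
    also have "\<dots> = (indicator {-pi..pi} w *\<^sub>R G w) * (CLINT t|lborel. complex_of_real (a t) * exp (\<i> * complex_of_real (w * t)))"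
      by (rule integral_mult_right_zero)
    also have "(CLINT t|lborel. complex_of_real (a t) * exp (\<i> * complex_of_real (w * t))) = exp (\<i> * complex_of_real (w * s)) * complex_of_real (dirichlet w R)"
      unfolding a_def by (rule truncated_nsinc_fourier[OF R])
    finally show "(CLINT t|lborel. \<Phi> t w) = indicator {-pi..pi} w *\<^sub>R (G w * (exp (\<i> * complex_of_real (w * s)) * complex_of_real (dirichlet w R)))"
      by (simp add: indicator_def)
  qed
  finally show ?thesis .
qed

lemma truncated_nsinc_integral_tendsto:
  "(\<lambda>k. LINT t|lborel. indicator {s - real k..s + real k} t * (nsinc (t - s) * v t))
     \<longlonglongrightarrow> (LINT t|lborel. nsinc (t - s) * v t)"
proof (rule integral_dominated_convergence[where w="\<lambda>t. \<bar>nsinc (t - s) * v t\<bar>"])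
  show "(\<lambda>t. nsinc (t - s) * v t) \<in> borel_measurable lborel" by measurable
  show "\<And>i. (\<lambda>t. indicator {s - real i..s + real i} t * (nsinc (t - s) * v t)) \<in> borel_measurable lborel"
    by measurable
  show "integrable lborel (\<lambda>t. \<bar>nsinc (t - s) * v t\<bar>)" by (intro integrable_abs nsinc_shift_mult_integrable)
  show "AE t in lborel. (\<lambda>i. indicator {s - real i..s + real i} t * (nsinc (t - s) * v t))
      \<longlonglongrightarrow> nsinc (t - s) * v t"
  proof (rule AE_I2)
    fix t
    obtain k0 :: nat where "\<bar>t - s\<bar> \<le> real k0" using real_arch_simple by blast
    then have "\<forall>\<^sub>F i in sequentially.
        indicator {s - real i..s + real i} t * (nsinc (t - s) * v t) = nsinc (t - s) * v t"
      by (intro eventually_sequentiallyI[of k0]) (auto simp: indicator_def abs_le_iff)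
    then show "(\<lambda>i. indicator {s - real i..s + real i} t * (nsinc (t - s) * v t)) \<longlonglongrightarrow> nsinc (t - s) * v t"
      by (rule tendsto_eventually)
  qed
  show "\<And>i. AE t in lborel. norm (indicator {s - real i..s + real i} t * (nsinc (t - s) * v t))
      \<le> \<bar>nsinc (t - s) * v t\<bar>"
    by (auto simp: indicator_def)
qed

text \<open>The Dirichlet factors converge to \<open>1\<close> on the open band and are uniformly bounded, so
  dominated convergence recovers the Fourier representation of \<open>v s\<close>.\<close>
lemma dirichlet_pairing_tendsto:
  "(\<lambda>k. CLINT w|lborel. indicator {-pi..pi} w *\<^sub>R
        (G w * (exp (\<i> * complex_of_real (w * s)) * complex_of_real (dirichlet w (real k)))))
     \<longlonglongrightarrow> complex_of_real (v s)"
proof -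
  obtain C where C: "\<forall>w R. \<bar>dirichlet w R\<bar> \<le> C" using dirichlet_bounded by blast
  have "(\<lambda>k. CLINT w|lborel. indicator {-pi..pi} w *\<^sub>R
        (G w * (exp (\<i> * complex_of_real (w * s)) * complex_of_real (dirichlet w (real k)))))
      \<longlonglongrightarrow> (CLINT w|lborel. indicator {-pi..pi} w *\<^sub>R (G w * exp (\<i> * complex_of_real (w * s))))"
  proof (rule integral_dominated_convergence[where w="\<lambda>w. C * (indicator {-pi..pi} w * cmod (G w))"])
    show "(\<lambda>w. indicator {-pi..pi} w *\<^sub>R (G w * exp (\<i> * complex_of_real (w * s)))) \<in> borel_measurable lborel"
      by measurable
    show "\<And>i. (\<lambda>w. indicator {-pi..pi} w *\<^sub>R
        (G w * (exp (\<i> * complex_of_real (w * s)) * complex_of_real (dirichlet w (real i)))))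
        \<in> borel_measurable lborel"
      unfolding dirichlet_def by measurable
    show "integrable lborel (\<lambda>w. C * (indicator {-pi..pi} w * cmod (G w)))"
      by (intro integrable_mult_right spectrum_norm_integrable)
    have "AE w in lborel. w \<noteq> pi" "AE w in lborel. w \<noteq> -pi" by (rule AE_lborel_singleton)+
    then show "AE w in lborel. (\<lambda>i. indicator {-pi..pi} w *\<^sub>R
        (G w * (exp (\<i> * complex_of_real (w * s)) * complex_of_real (dirichlet w (real i)))))
        \<longlonglongrightarrow> indicator {-pi..pi} w *\<^sub>R (G w * exp (\<i> * complex_of_real (w * s)))"
    proof eventually_elim
      case (elim w)
      show ?case
      proof (cases "w \<in> {-pi..pi}")
        case True
        then have "(\<lambda>i. dirichlet w (real i)) \<longlonglongrightarrow> 1" using elim by (intro dirichlet_limit) auto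
        then have "(\<lambda>i. indicator {-pi..pi} w *\<^sub>R
            (G w * (exp (\<i> * complex_of_real (w * s)) * complex_of_real (dirichlet w (real i)))))
            \<longlonglongrightarrow> indicator {-pi..pi} w *\<^sub>R (G w * (exp (\<i> * complex_of_real (w * s)) * complex_of_real 1))"
          by (intro tendsto_intros)
        then show ?thesis by simp
      qed simp
    qed
    fix i
    have "cmod (G w) * \<bar>dirichlet w (real i)\<bar> \<le> cmod (G w) * C" for w
      using C by (intro mult_left_mono) auto
    then show "AE w in lborel. norm (indicator {-pi..pi} w *\<^sub>R
        (G w * (exp (\<i> * complex_of_real (w * s)) * complex_of_real (dirichlet w (real i)))))
        \<le> C * (indicator {-pi..pi} w * cmod (G w))"
      by (auto simp: indicator_def norm_mult norm_exp_i_times mult.commute)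
  qed
  moreover have "(CLINT w|lborel. indicator {-pi..pi} w *\<^sub>R (G w * exp (\<i> * complex_of_real (w * s))))
      = complex_of_real (v s)"
    using v_fourier[of s] by (simp add: set_lebesgue_integral_def)
  ultimately show ?thesis by simp
qed

lemma nsinc_reproducing: "(LINT t|lborel. nsinc (t - s) * v t) = v s"
proof -
  have "complex_of_real (LINT t|lborel. indicator {s - real k..s + real k} t * (nsinc (t - s) * v t)) =
      (CLINT w|lborel. indicator {-pi..pi} w *\<^sub>R
        (G w * (exp (\<i> * complex_of_real (w * s)) * complex_of_real (dirichlet w (real k)))))" for k
    by (rule truncated_nsinc_pairing) simp
  then have "(\<lambda>k. complex_of_real (LINT t|lborel. indicator {s - real k..s + real k} t * (nsinc (t - s) * v t)))
      \<longlonglongrightarrow> complex_of_real (v s)"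
    using dirichlet_pairing_tendsto by simp
  then have "(\<lambda>k. LINT t|lborel. indicator {s - real k..s + real k} t * (nsinc (t - s) * v t)) \<longlonglongrightarrow> v s"
    by (simp add: tendsto_of_real_iff)
  with truncated_nsinc_integral_tendsto show ?thesis using LIMSEQ_unique by blast
qed

end

section \<open>Bandlimited projection of a pulse\<close>

locale pulse =
  fixes h :: "real \<Rightarrow> real" and a c :: real
  assumes h_measurable[measurable]: "h \<in> borel_measurable lborel"
    and abs_h_le_indicator: "\<And>s. \<bar>h s\<bar> \<le> indicator {a..c} s"
    and a_le_c: "a \<le> c"
begin

lemma pulse_indicator_integrable: "integrable lborel (indicator {a..c} :: real \<Rightarrow> real)"
  by (rule integrable_real_indicator) (auto simp: emeasure_lborel_Icc_eq)

lemma pulse_integrable: "integrable lborel h"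
  by (rule Bochner_Integration.integrable_bound[OF pulse_indicator_integrable]) (use abs_h_le_indicator in \<open>auto simp: indicator_def\<close>)

lemma pulse_L2: "h \<in> L2 UNIV"
proof -
  have "integrable lborel (\<lambda>s. (h s)^2)"
  proof (rule Bochner_Integration.integrable_bound[OF pulse_indicator_integrable])
    show "(\<lambda>s. (h s)^2) \<in> borel_measurable lborel" by measurable
    have "(h s)^2 \<le> indicator {a..c} s" for s
      using abs_h_le_indicator[of s] by (auto simp: indicator_def abs_square_le_1)
    then show "AE s in lborel. norm ((h s)^2) \<le> norm (indicator {a..c} s :: real)" by auto
  qed
  then show ?thesis unfolding L2_def set_integrable_def by simp
qed

definition lowpass :: "real \<Rightarrow> real" where "lowpass t = (LINT s|lborel. h s * nsinc (t - s))"

lemma lowpass_measurable[measurable]: "lowpass \<in> borel_measurable lborel"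
  unfolding lowpass_def by measurable

definition pulse_radius where "pulse_radius = \<bar>a\<bar> + \<bar>c\<bar>"
definition pulse_const where "pulse_const = 4 * (1 + 2 * pulse_radius^2)"

lemma nsinc_shift_bound:
  assumes s: "s \<in> {a..c}" shows "\<bar>nsinc (t - s)\<bar> \<le> sqrt (pulse_const * inverse (1 + t^2))"
proof -
  have "\<bar>s\<bar> \<le> pulse_radius" using s unfolding pulse_radius_def by auto
  then have "\<bar>s\<bar>^2 \<le> pulse_radius^2" by (rule power_mono) simp
  then have sS: "s^2 \<le> pulse_radius^2" by simp
  have "t^2 \<le> 2 * (t - s)^2 + 2 * s^2"
  proof -
    have "0 \<le> (t - 2 * s)^2" by simp
    then show ?thesis by (simp add: power2_eq_square algebra_simps)
  qed
  then have "1 + t^2 \<le> 2 * (1 + 2 * pulse_radius^2) * (1 + (t - s)^2)"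
  proof -
    have e: "2 * (1 + 2 * pulse_radius^2) * (1 + (t - s)^2) = 2 + 2 * (t - s)^2 + 4 * pulse_radius^2 + 4 * (pulse_radius^2 * (t - s)^2)"
      by (simp add: algebra_simps)
    have "0 \<le> pulse_radius^2 * (t - s)^2" by simp
    then show ?thesis unfolding e using sS \<open>t^2 \<le> 2 * (t - s)^2 + 2 * s^2\<close> zero_le_power2[of pulse_radius] by linarith
  qed
  then have i: "inverse (1 + (t - s)^2) \<le> 2 * (1 + 2 * pulse_radius^2) * inverse (1 + t^2)"
    by (simp add: field_simps add_pos_nonneg)
  have "(nsinc (t - s))^2 \<le> 2 * inverse (1 + (t - s)^2)" by (rule nsinc_square_bound)
  also have "\<dots> \<le> pulse_const * inverse (1 + t^2)" using mult_left_mono[OF i, of 2] unfolding pulse_const_def by (simp add: algebra_simps)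
  finally have "\<bar>nsinc (t - s)\<bar>^2 \<le> pulse_const * inverse (1 + t^2)" by simp
  then show ?thesis by (simp add: real_le_rsqrt)
qed

lemma lowpass_bound: "\<bar>lowpass t\<bar> \<le> (c - a) * sqrt (pulse_const * inverse (1 + t^2))"
proof -
  let ?m = "sqrt (pulse_const * inverse (1 + t^2))"
  have bd: "norm (h s * nsinc (t - s)) \<le> indicator {a..c} s * ?m" for s
  proof (cases "s \<in> {a..c}")
    case True
    have "\<bar>h s\<bar> * \<bar>nsinc (t - s)\<bar> \<le> 1 * ?m"
      using abs_h_le_indicator[of s] nsinc_shift_bound[OF True, of t] True by (intro mult_mono) auto
    then show ?thesis using True by (simp add: abs_mult)
  next
    case False then have "indicator {a..c} s = (0::real)" by simp
    then have "h s = 0" using abs_h_le_indicator[of s] by simp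
    then show ?thesis using False by simp
  qed
  have f_int: "integrable lborel (\<lambda>s. h s * nsinc (t - s))"
  proof (rule Bochner_Integration.integrable_bound[OF pulse_indicator_integrable])
    show "(\<lambda>s. h s * nsinc (t - s)) \<in> borel_measurable lborel" by measurable
    have "\<bar>h s * nsinc (t - s)\<bar> \<le> indicator {a..c} s" for s
    proof -
      have "\<bar>h s\<bar> * \<bar>nsinc (t - s)\<bar> \<le> \<bar>h s\<bar>" by (rule mult_right_le_one_le) (use abs_nsinc_le_1 in auto)
      then show ?thesis using abs_h_le_indicator[of s] by (simp add: abs_mult)
    qed
    then show "AE s in lborel. norm (h s * nsinc (t - s)) \<le> norm (indicator {a..c} s :: real)" by auto
  qed
  have g_int: "integrable lborel (\<lambda>s. indicator {a..c} s * ?m)" by (rule integrable_mult_left[OF pulse_indicator_integrable])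
  have "norm (LINT s|lborel. h s * nsinc (t - s)) \<le> (LINT s|lborel. indicator {a..c} s * ?m)"
    by (rule Bochner_Integration.integral_norm_bound_integral[OF f_int g_int]) (use bd in auto)
  then have "\<bar>lowpass t\<bar> \<le> (LINT s|lborel. indicator {a..c} s * ?m)" by (simp add: lowpass_def)
  also have "\<dots> = (c - a) * ?m" using a_le_c by simp
  finally show ?thesis .
qed

lemma lowpass_L2: "lowpass \<in> L2 UNIV"
proof -
  have "integrable lborel (\<lambda>t. (lowpass t)^2)"
  proof (rule Bochner_Integration.integrable_bound[of _ "\<lambda>t. (c - a)^2 * pulse_const * inverse (1 + t^2)"])
    show "integrable lborel (\<lambda>t. (c - a)^2 * pulse_const * inverse (1 + t^2))" by (intro integrable_mult_right integrable_inverse_1_plus_square_lborel)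
    show "(\<lambda>t. (lowpass t)^2) \<in> borel_measurable lborel" by measurable
    have "(lowpass t)^2 \<le> (c - a)^2 * pulse_const * inverse (1 + t^2)" for t
    proof -
      have C1p: "0 \<le> pulse_const * inverse (1 + t^2)" unfolding pulse_const_def by (simp add: add_pos_nonneg)
      have "\<bar>lowpass t\<bar>^2 \<le> ((c - a) * sqrt (pulse_const * inverse (1 + t^2)))^2" by (rule power_mono[OF lowpass_bound]) simp
      also have "\<dots> = (c - a)^2 * pulse_const * inverse (1 + t^2)" using C1p by (simp add: power_mult_distrib)
      finally show ?thesis by simp
    qed
    then show "AE t in lborel. norm ((lowpass t)^2) \<le> norm ((c - a)^2 * pulse_const * inverse (1 + t^2))"
      by (auto intro: order_trans[OF _ abs_ge_self])
  qed
  then show ?thesis unfolding L2_def set_integrable_def by simp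
qed

definition lowpass_spectrum :: "real \<Rightarrow> complex" where
  "lowpass_spectrum w = (CLINT s|lborel. complex_of_real (h s / (2 * pi)) * exp (- (\<i> * complex_of_real (w * s))))"

lemma lowpass_spectrum_measurable[measurable]: "lowpass_spectrum \<in> borel_measurable lborel"
  unfolding lowpass_spectrum_def by measurable

lemma lowpass_spectrum_bound: "cmod (lowpass_spectrum w) \<le> (c - a) / (2 * pi)"
proof -
  have "cmod (lowpass_spectrum w) \<le> (LINT s|lborel. norm (complex_of_real (h s / (2 * pi)) * exp (- (\<i> * complex_of_real (w * s)))))"
    unfolding lowpass_spectrum_def by (rule integral_norm_bound)
  also have "\<dots> = (LINT s|lborel. \<bar>h s\<bar> / (2 * pi))"
  proof (intro Bochner_Integration.integral_cong refl)
    fix s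
    have ee: "exp (- (\<i> * complex_of_real (w * s))) = exp (\<i> * complex_of_real (- (w * s)))" by simp
    show "norm (complex_of_real (h s / (2 * pi)) * exp (- (\<i> * complex_of_real (w * s)))) = \<bar>h s\<bar> / (2 * pi)"
      unfolding ee norm_mult norm_exp_i_times norm_of_real by (simp add: abs_divide)
  qed
  also have "\<dots> \<le> (LINT s|lborel. indicator {a..c} s / (2 * pi))"
    by (intro integral_mono integrable_divide integrable_abs pulse_integrable pulse_indicator_integrable) (use abs_h_le_indicator in \<open>auto intro: divide_right_mono\<close>)
  also have "\<dots> = (c - a) / (2 * pi)" using a_le_c by simp
  finally show ?thesis .
qed

lemma lowpass_spectrum_square_integrable: "set_integrable lborel {-pi..pi} (\<lambda>w. (cmod (lowpass_spectrum w))^2)"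
proof (rule set_integrable_bound[of _ _ "\<lambda>_. ((c - a) / (2 * pi))^2"])
  show "set_integrable lborel {-pi..pi} (\<lambda>_. ((c - a) / (2 * pi))^2)"
    by (rule borel_integrable_atLeastAtMost') (rule continuous_on_const)
  show "set_borel_measurable lborel {-pi..pi} (\<lambda>w. (cmod (lowpass_spectrum w))^2)"
    unfolding set_borel_measurable_def by measurable
  have "(cmod (lowpass_spectrum w))^2 \<le> ((c - a) / (2 * pi))^2" for w by (rule power_mono[OF lowpass_spectrum_bound]) simp
  then show "AE w\<in>{-pi..pi} in lborel. norm ((cmod (lowpass_spectrum w))^2) \<le> norm (((c - a) / (2 * pi))^2)" by auto
qed

lemma lowpass_spectrum_mult_exp:
  "lowpass_spectrum w * exp (\<i> * complex_of_real (w * t)) =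
     (CLINT s|lborel. complex_of_real (h s / (2 * pi)) * exp (\<i> * complex_of_real (w * (t - s))))"
proof -
  have "exp (- (\<i> * complex_of_real (w * s))) * exp (\<i> * complex_of_real (w * t)) =
      exp (\<i> * complex_of_real (w * (t - s)))" for s
    by (simp add: exp_add[symmetric] right_diff_distrib algebra_simps)
  then show ?thesis
    unfolding lowpass_spectrum_def integral_mult_left_zero[symmetric] by (simp add: mult.assoc)
qed

lemma lowpass_kernel_integrable:
  "integrable (lborel \<Otimes>\<^sub>M lborel) (\<lambda>(w, s). complex_of_real (indicator {-pi..pi} w) *
     (complex_of_real (h s / (2 * pi)) * exp (\<i> * complex_of_real (w * (t - s)))))"
proof (rule integrable_lborel_pair_product_bound[of _ "indicator {-pi..pi}" "\<lambda>s. indicator {a..c} s / (2 * pi)"])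
  show "integrable lborel (indicator {-pi..pi} :: real \<Rightarrow> real)"
    by (rule integrable_real_indicator) (auto simp: emeasure_lborel_Icc_eq)
  show "integrable lborel (\<lambda>s. indicator {a..c} s / (2 * pi))"
    by (intro integrable_divide pulse_indicator_integrable)
  fix w s
  have l: "\<bar>h s\<bar> / (2 * pi) \<le> indicator {a..c} s / (2 * pi)" using abs_h_le_indicator[of s] by (intro divide_right_mono) auto
  have "norm (case (w, s) of (w, s) \<Rightarrow> complex_of_real (indicator {-pi..pi} w) *
      (complex_of_real (h s / (2 * pi)) * exp (\<i> * complex_of_real (w * (t - s)))))
      = indicator {-pi..pi} w * (\<bar>h s\<bar> / (2 * pi))"
    by (simp only: case_prod_conv norm_mult norm_exp_i_times norm_of_real) (simp add: abs_divide)
  then show "norm (case (w, s) of (w, s) \<Rightarrow> complex_of_real (indicator {-pi..pi} w) *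
      (complex_of_real (h s / (2 * pi)) * exp (\<i> * complex_of_real (w * (t - s)))))
      \<le> indicator {-pi..pi} w * (indicator {a..c} s / (2 * pi))"
    using mult_left_mono[OF l, of "indicator {-pi..pi} w"] by simp
qed measurable

lemma lowpass_fourier:
  "complex_of_real (lowpass t) =
     set_lebesgue_integral lborel {-pi..pi} (\<lambda>w. lowpass_spectrum w * exp (\<i> * complex_of_real (w * t)))"
proof -
  define \<Psi> where "\<Psi> w s = complex_of_real (indicator {-pi..pi} w) *
      (complex_of_real (h s / (2 * pi)) * exp (\<i> * complex_of_real (w * (t - s))))" for w s
  have "set_lebesgue_integral lborel {-pi..pi} (\<lambda>w. lowpass_spectrum w * exp (\<i> * complex_of_real (w * t)))
      = (CLINT w|lborel. CLINT s|lborel. \<Psi> w s)"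
    unfolding set_lebesgue_integral_def \<Psi>_def lowpass_spectrum_mult_exp
    by (simp add: scaleR_conv_of_real integral_mult_right_zero)
  also have "\<dots> = (CLINT s|lborel. CLINT w|lborel. \<Psi> w s)"
    by (rule lborel_pair.Fubini_integral[symmetric]) (use lowpass_kernel_integrable in \<open>simp add: \<Psi>_def\<close>)
  also have "\<dots> = (CLINT s|lborel. complex_of_real (h s * nsinc (t - s)))"
  proof (intro Bochner_Integration.integral_cong refl)
    fix s
    have "(CLINT w|lborel. \<Psi> w s) = complex_of_real (h s / (2 * pi)) *
        (CLINT w|lborel. complex_of_real (indicator {-pi..pi} w) * exp (\<i> * complex_of_real (w * (t - s))))"
      unfolding \<Psi>_def integral_mult_right_zero[symmetric] by (simp add: algebra_simps)
    also have "\<dots> = complex_of_real (h s / (2 * pi)) * complex_of_real (2 * pi * nsinc (t - s))"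
      by (simp only: nsinc_fourier)
    also have "\<dots> = complex_of_real (h s * nsinc (t - s))" by (simp add: field_simps)
    finally show "(CLINT w|lborel. \<Psi> w s) = complex_of_real (h s * nsinc (t - s))" .
  qed
  also have "\<dots> = complex_of_real (lowpass t)" unfolding lowpass_def by (rule integral_complex_of_real)
  finally show ?thesis by simp
qed

lemma lowpass_BL: "lowpass \<in> BL RealLine"
proof -
  have "bandlimited RealLine lowpass" unfolding bandlimited.simps
    by (rule exI[of _ lowpass_spectrum]) (use lowpass_spectrum_measurable lowpass_spectrum_square_integrable lowpass_fourier in blast)
  then show ?thesis unfolding BL_def using lowpass_L2 by auto
qed

lemma lowpass_pairing:
  assumes "paley_wiener v G"
  shows "(LINT t|lborel. lowpass t * v t) = (LINT s|lborel. h s * v s)"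
proof -
  interpret paley_wiener v G by (rule assms)
  define \<Phi> where "\<Phi> s t = h s * (nsinc (t - s) * v t)" for s t
  define C where "C = (LINT x|lborel. (nsinc x)^2) + (LINT t|lborel. (v t)^2)"
  have C: "0 \<le> C" unfolding C_def by (intro add_nonneg_nonneg integral_nonneg_AE) auto
  have int: "integrable (lborel \<Otimes>\<^sub>M lborel) (case_prod \<Phi>)"
  proof (rule lborel_pair.Fubini_integrable)
    show "case_prod \<Phi> \<in> borel_measurable (lborel \<Otimes>\<^sub>M lborel)" unfolding \<Phi>_def by measurable
    have eq: "(LINT t|lborel. norm (case_prod \<Phi> (s, t))) = \<bar>h s\<bar> * (LINT t|lborel. \<bar>nsinc (t - s) * v t\<bar>)" for s
      unfolding \<Phi>_def by (simp add: abs_mult integral_mult_right_zero)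
    show "integrable lborel (\<lambda>s. LINT t|lborel. norm (case_prod \<Phi> (s, t)))"
    proof (rule Bochner_Integration.integrable_bound[of _ "\<lambda>s. C * indicator {a..c} s"])
      show "integrable lborel (\<lambda>s. C * indicator {a..c} s)" by (intro integrable_mult_right pulse_indicator_integrable)
      show "(\<lambda>s. LINT t|lborel. norm (case_prod \<Phi> (s, t))) \<in> borel_measurable lborel" unfolding \<Phi>_def by measurable
      have "\<bar>h s\<bar> * (LINT t|lborel. \<bar>nsinc (t - s) * v t\<bar>) \<le> indicator {a..c} s * C" for s
        using abs_h_le_indicator[of s] nsinc_shift_mult_L1_bound[of s] unfolding C_def
        by (intro mult_mono) (auto intro: integral_nonneg_AE)
      then show "AE s in lborel. norm (LINT t|lborel. norm (case_prod \<Phi> (s, t))) \<le> norm (C * indicator {a..c} s)"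
        unfolding eq using C by (auto simp: abs_mult mult.commute intro!: integral_nonneg_AE order_trans[OF _ abs_ge_self])
    qed
    show "AE s in lborel. integrable lborel (\<lambda>t. case_prod \<Phi> (s, t))"
      unfolding \<Phi>_def by (auto intro!: integrable_mult_right nsinc_shift_mult_integrable)
  qed
  have "(LINT t|lborel. LINT s|lborel. \<Phi> s t) = (LINT s|lborel. LINT t|lborel. \<Phi> s t)"
    by (rule lborel_pair.Fubini_integral[OF int])
  moreover have "(LINT s|lborel. \<Phi> s t) = lowpass t * v t" for t
    unfolding \<Phi>_def lowpass_def by (simp add: integral_mult_left_zero[symmetric] mult.assoc)
  moreover have "(LINT t|lborel. \<Phi> s t) = h s * v s" for s
    unfolding \<Phi>_def by (simp add: integral_mult_right_zero nsinc_reproducing)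
  ultimately show ?thesis by simp
qed

lemma pulse_minus_lowpass_orth:
  assumes v: "v \<in> BL RealLine"
  shows "ip UNIV (\<lambda>t. h t - lowpass t) v = 0"
proof -
  obtain G where G: "G \<in> borel_measurable lborel" "set_integrable lborel {-pi..pi} (\<lambda>w. (cmod (G w))^2)"
    "\<forall>t. complex_of_real (v t) = set_lebesgue_integral lborel {-pi..pi} (\<lambda>w. G w * exp (\<i> * complex_of_real (w * t)))"
    using v unfolding BL_def by auto
  have vL: "v \<in> L2 UNIV" using v unfolding BL_def by simp
  have pwv: "paley_wiener v G" by unfold_locales (use G vL in auto)
  have hv: "integrable lborel (\<lambda>t. h t * v t)" using L2_mult_integrable[OF _ pulse_L2 vL] by (simp add: set_integrable_def)
  have bv: "integrable lborel (\<lambda>t. lowpass t * v t)" using L2_mult_integrable[OF _ lowpass_L2 vL] by (simp add: set_integrable_def)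
  have "ip UNIV (\<lambda>t. h t - lowpass t) v = (LINT t|lborel. h t * v t - lowpass t * v t)"
    unfolding ip_def set_lebesgue_integral_def by (simp add: algebra_simps)
  also have "\<dots> = (LINT t|lborel. h t * v t) - (LINT t|lborel. lowpass t * v t)"
    by (rule Bochner_Integration.integral_diff[OF hv bv])
  also have "\<dots> = 0" using lowpass_pairing[OF pwv] by simp
  finally show ?thesis .
qed

end

lemma exists_BL_projection_RealLine:
  assumes "h \<in> borel_measurable lborel" and "\<And>s. \<bar>h s\<bar> \<le> indicator {a..c} s" and "a \<le> c"
  shows "\<exists>b\<in>BL RealLine. \<forall>v\<in>BL RealLine. ip UNIV (\<lambda>t. h t - b t) v = 0"
proof -
  interpret pulse h a c by unfold_locales (use assms in auto)
  show ?thesis using lowpass_BL pulse_minus_lowpass_orth by blast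
qed

lemma exists_BL_projection_hfun:
  assumes alpha: "\<alpha> \<ge> 0" and t0: "tt 0 = 0" and tmono: "\<And>n. n < N \<Longrightarrow> tt n < tt (Suc n)"
    and tN: "tt N \<in> dset dm" and n: "n \<in> {1..N}"
  shows "\<exists>b\<in>BL dm. \<forall>v\<in>BL dm. ip (dset dm) (\<lambda>t. hfun \<alpha> tt n t - b t) v = 0"
proof (cases dm)
  case RealLine
  have "\<bar>hfun \<alpha> tt n s\<bar> \<le> indicator {tt (n-1)..tt n} s" for s
    using hfun_nonneg[of \<alpha> tt n s] hfun_le_indicator[OF alpha, of tt n s] by simp
  moreover have "tt (n-1) \<le> tt n" using tt_le[of N tt, OF tmono, of "n-1" n] n by auto
  ultimately show ?thesis unfolding RealLine dset.simps by (rule exists_BL_projection_RealLine[OF hfun_measurable])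
next
  case (Interval T)
  have "hfun \<alpha> tt n \<in> L2 {0..real T}" by (rule hfun_L2[OF alpha]) simp
  then show ?thesis unfolding Interval dset.simps by (rule exists_BL_projection_Interval)
qed

lemma sampling_setting_hfun:
  assumes alpha: "\<alpha> \<ge> 0" and t0: "tt 0 = 0" and tmono: "\<And>n. n < N \<Longrightarrow> tt n < tt (Suc n)"
    and tN: "tt N \<in> dset dm"
  obtains b where "sampling_setting (L2 (dset dm)) (ip (dset dm)) (BL dm) (hfun \<alpha> tt) N b"
proof -
  obtain b where b: "\<And>n. n \<in> {1..N} \<Longrightarrow> b n \<in> BL dm \<and>
      (\<forall>v\<in>BL dm. ip (dset dm) (\<lambda>t. hfun \<alpha> tt n t - b n t) v = 0)"
    using exists_BL_projection_hfun[OF alpha t0 tmono tN] by metis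
  have "sampling_setting (L2 (dset dm)) (ip (dset dm)) (BL dm) (hfun \<alpha> tt) N b"
  proof (rule sampling_setting.intro[OF L2_semi_inner_space[OF dset_sets]], unfold_locales)
    show "BL dm \<subseteq> L2 (dset dm)" unfolding BL_def by auto
    show "(\<lambda>_. 0) \<in> BL dm" by (rule BL_zero)
    show "\<And>u v a c. u \<in> BL dm \<Longrightarrow> v \<in> BL dm \<Longrightarrow> (\<lambda>t. a * u t + c * v t) \<in> BL dm"
      by (rule BL_lincomb)
    show "\<And>n. hfun \<alpha> tt n \<in> L2 (dset dm)" by (rule hfun_L2[OF alpha dset_sets])
    show "\<And>m n. m \<in> {1..N} \<Longrightarrow> n \<in> {1..N} \<Longrightarrow> m \<noteq> n \<Longrightarrow>
        ip (dset dm) (hfun \<alpha> tt m) (hfun \<alpha> tt n) = 0"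
      by (rule hfun_orth[of N tt, OF tmono])
    show "\<And>n. n \<in> {1..N} \<Longrightarrow> 0 < ip (dset dm) (hfun \<alpha> tt n) (hfun \<alpha> tt n)"
      by (rule hfun_pos[of N tt, OF tmono t0 tN _ alpha])
  qed (use b in auto)
  then show thesis by (rule that)
qed

lemma nrm_eq_form_norm: "nrm D = form_norm (ip D)"
  by (rule ext) (simp add: nrm_def form_norm_def)

lemma proj_eq_nearest_point: "proj D S = nearest_point (ip D) S"
  by (rule ext) (simp add: proj_def nearest_point_def nrm_eq_form_norm)

lemma Cset_eq_consistent_set: "Cset dm \<alpha> tt N \<theta> = consistent_set (L2 (dset dm)) (ip (dset dm)) (hfun \<alpha> tt) N \<theta>"
  by (simp add: Cset_def consistent_set_def)

lemma Hmap_eq_sample_map: "Hmap dm \<alpha> tt N = sample_map (ip (dset dm)) (hfun \<alpha> tt) N"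
  by (intro ext) (simp add: Hmap_def sample_map_def)

lemma nrmN_eq_sample_norm: "nrmN dm \<alpha> tt N = sample_norm (ip (dset dm)) (hfun \<alpha> tt) N"
  by (intro ext) (simp add: nrmN_def ipN_def sample_norm_def sample_inner_def nrm_eq_form_norm)

lemma projN_eq_sample_proj: "projN dm \<alpha> tt N = sample_proj (ip (dset dm)) (hfun \<alpha> tt) N (BL dm)"
  by (intro ext) (simp add: projN_def sample_proj_def nearest_point_def form_norm_def
      Hmap_eq_sample_map nrmN_eq_sample_norm sample_norm_def)

lemma Hdag_eq_sample_pinv: "Hdag dm \<alpha> tt N = sample_pinv (ip (dset dm)) (hfun \<alpha> tt) N (BL dm)"
  by (intro ext) (simp add: Hdag_def sample_pinv_def Hmap_eq_sample_map projN_eq_sample_proj nrm_eq_form_norm)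

theorem mainTheorem6:
  fixes dm :: domain and \<alpha> :: real and N :: nat and tt :: "nat \<Rightarrow> real"
    and x :: "real \<Rightarrow> real" and e :: "nat \<Rightarrow> real"
  assumes dom_T: "\<And>T. dm = Interval T \<Longrightarrow> odd T"
    and alpha: "\<alpha> \<ge> 0"
    and N: "N \<ge> 1"
    and t0: "tt 0 = 0"
    and tmono: "\<And>n. n < N \<Longrightarrow> tt n < tt (Suc n)"
    and tN: "tt N \<in> dset dm"
    and xB: "x \<in> BL dm"
  defines "\<theta>0 \<equiv> Hmap dm \<alpha> tt N x"
    and "\<theta> \<equiv> (\<lambda>n. Hmap dm \<alpha> tt N x n - e n)"
    and "ebar \<equiv> projN dm \<alpha> tt N e"
  shows "(\<lambda>k. nrm (dset dm)
            (\<lambda>s. ((proj (dset dm) (BL dm) \<circ> proj (dset dm) (Cset dm \<alpha> tt N \<theta>)) ^^ k) (\<lambda>_. 0) s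
                 - Hdag dm \<alpha> tt N (\<lambda>n. \<theta>0 n - ebar n) s)) \<longlonglongrightarrow> 0
       \<and> (nrmN dm \<alpha> tt N ebar)^2 + (nrmN dm \<alpha> tt N (\<lambda>n. e n - ebar n))^2 = (nrmN dm \<alpha> tt N e)^2
       \<and> nrmN dm \<alpha> tt N ebar \<le> nrmN dm \<alpha> tt N e"
proof -
  obtain b where "sampling_setting (L2 (dset dm)) (ip (dset dm)) (BL dm) (hfun \<alpha> tt) N b"
    using sampling_setting_hfun[OF alpha t0 tmono tN] .
  then interpret sampling_setting "L2 (dset dm)" "ip (dset dm)" "BL dm" "hfun \<alpha> tt" N b .
  show ?thesis
    unfolding \<theta>0_def \<theta>_def ebar_def proj_eq_nearest_point nrm_eq_form_norm Cset_eq_consistent_set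
      Hmap_eq_sample_map Hdag_eq_sample_pinv projN_eq_sample_proj nrmN_eq_sample_norm
    using alternating_projections_tendsto_pinv[OF xB] sample_proj_pythagoras sample_proj_norm_le
    by blast
qed

end
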